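(* Let $L\in\mathbb{N}$ and $0<\alpha_M<\alpha_Q$. For $\ell=1,\dots,L$ let $M_\ell,Q_\ell$ be independent random variables with PDFs $$f_{M_\ell}(m)=\frac{\alpha_M\mu_{M,\ell}^{\mu_{M,\ell}}m^{\alpha_M\mu_{M,\ell}-1}}{\Omega_{M,\ell}^{\alpha_M\mu_{M,\ell}}\Gamma(\mu_{M,\ell})}\exp\Big(-\mu_{M,\ell}\frac{m^{\alpha_M}}{\Omega_{M,\ell}^{\alpha_M}}\Big),\quad f_{Q_\ell}(q)=\frac{\alpha_Q\mu_{Q,\ell}^{\mu_{Q,\ell}}q^{\alpha_Q\mu_{Q,\ell}-1}}{\Omega_{Q,\ell}^{\alpha_Q\mu_{Q,\ell}}\Gamma(\mu_{Q,\ell})}\exp\Big(-\mu_{Q,\ell}\frac{q^{\alpha_Q}}{\Omega_{Q,\ell}^{\alpha_Q}}\Big)$$ on $(0,\infty)$, where $\mu_{a,\ell},\Omega_{a,\ell}>0$, and let $Z_\ell=M_\ell/Q_\ell$, with $Z_1,\dots,Z_L$ independent. Let $Z=\sum_{\ell=1}^LZ_\ell$, $\tilde\varrho_\ell=\frac{\Omega_{Q,\ell}\mu_{M,\ell}^{1/\alpha_M}}{\Omega_{M,\ell}\mu_{Q,\ell}^{1/\alpha_Q}}$, and for $i\ge0$ $$u_{i,\ell}=\frac{(-1)^i\,\Gamma(\alpha_M(i+\mu_{M,\ell}))}{i!\,\tilde\varrho_\ell^{-\alpha_M(\mu_{M,\ell}+i)}}\,\Gamma\Big(\frac{\alpha_M(i+\mu_{M,\ell})}{\alpha_Q}+\mu_{Q,\ell}\Big).$$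 Define $\phi_{0,\ell}=u_{1,\ell}/u_{0,\ell}$, $\phi_{h,\ell}=\frac{1}{u_{0,\ell}}\big[(h+1)u_{h+1,\ell}-\sum_{t=1}^hu_{t,\ell}\phi_{h-t,\ell}\big]$ for $h\ge1$, $\delta_0=\prod_{\ell=1}^Lu_{0,\ell}$ and $\delta_i=\frac1i\sum_{h=1}^i\delta_{i-h}\sum_{\ell=1}^L\phi_{h-1,\ell}$ for $i\ge1$. Then, with $B=\alpha_M\sum_{\ell=1}^L\mu_{M,\ell}$ and $C=\alpha_M^L\prod_{\ell=1}^L\frac{1}{\Gamma(\mu_{M,\ell})\Gamma(\mu_{Q,\ell})}$, $$f_Z(z)=C\sum_{i=0}^\infty\frac{\delta_i\,z^{-1+i\alpha_M+B}}{\Gamma(i\alpha_M+B)},\qquad F_Z(z)=C\sum_{i=0}^\infty\frac{\delta_i\,z^{i\alpha_M+B}}{\Gamma(1+i\alpha_M+B)},\qquad z\ge0.$$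
   Context: $\Gamma$ is the gamma function. $M_\ell$ and $Q_\ell$ are $\alpha$-$\mu$ distributed; the pairs need not be identically distributed across $\ell$. *)

theory Defs
  imports "HOL-Probability.Probability"
begin

definition alpha_mu_pdf :: "real \<Rightarrow> real \<Rightarrow> real \<Rightarrow> real \<Rightarrow> real" where
  "alpha_mu_pdf a mu Om x =
     (if 0 < x then
        a * mu powr mu * x powr (a * mu - 1) / (Om powr (a * mu) * Gamma mu)
          * exp (- mu * x powr a / Om powr a)
      else 0)"

definition rho_tilde :: "real \<Rightarrow> real \<Rightarrow> real \<Rightarrow> real \<Rightarrow> real \<Rightarrow> real \<Rightarrow> real" where
  "rho_tilde aM aQ muM muQ OmM OmQ =
     OmQ * muM powr (1 / aM) / (OmM * muQ powr (1 / aQ))"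

definition u_coef :: "real \<Rightarrow> real \<Rightarrow> real \<Rightarrow> real \<Rightarrow> real \<Rightarrow> real \<Rightarrow> nat \<Rightarrow> real" where
  "u_coef aM aQ muM muQ OmM OmQ i =
     (-1) ^ i * Gamma (aM * (real i + muM))
       / (fact i * rho_tilde aM aQ muM muQ OmM OmQ powr (- aM * (muM + real i)))
       * Gamma (aM * (real i + muM) / aQ + muQ)"

fun phi_coef :: "(nat \<Rightarrow> real) \<Rightarrow> nat \<Rightarrow> real" where
  "phi_coef u 0 = u 1 / u 0"
| "phi_coef u (Suc h) =
     (1 / u 0) * (real (Suc h + 1) * u (Suc h + 1)
        - (\<Sum>t = 1..Suc h. u t * phi_coef u (Suc h - t)))"

fun delta_coef :: "nat \<Rightarrow> (nat \<Rightarrow> real) \<Rightarrow> (nat \<Rightarrow> nat \<Rightarrow> real) \<Rightarrow> nat \<Rightarrow> real" where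
  "delta_coef L u0 phi 0 = (\<Prod>l = 1..L. u0 l)"
| "delta_coef L u0 phi (Suc i) =
     (1 / real (Suc i)) * (\<Sum>h = 1..Suc i. delta_coef L u0 phi (Suc i - h) * (\<Sum>l = 1..L. phi l (h - 1)))"

end

theory Submission
  imports Defs "HOL-Computational_Algebra.Formal_Power_Series"
begin

(* For t > 0 the density of Z_l = M_l / Q_l is the integral of y f_M(t y) f_Q(y) over y > 0.
   Expanding exp (-mu_M (t y)^alpha_M / Omega_M^alpha_M) into its power series and integrating
   termwise against the Q-density (dominated convergence holds because alpha_M < alpha_Q) turns every
   term into a Gamma-function moment, so f_{Z_l}(t) = sum_i c_i t^(s_i - 1) / Gamma(s_i) with
   s_i = i alpha_M + alpha_M mu_M and c_i proportional to u_{i,l}.  Such "gamma series" are closed under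
   convolution: by the Beta integral the kernels z^(s-1) / Gamma(s) convolve to z^(s+s'-1) / Gamma(s+s'),
   so the coefficient sequence of the density of an independent sum is the Cauchy product of the
   coefficient sequences.  Coefficients are therefore treated as formal power series, and the density of
   Z has coefficients C delta_i where delta_i are the coefficients of prod_l U_l with U_l = sum_i u_{i,l} X^i:
   phi_{.,l} are the coefficients of U_l' / U_l, and the recursion for delta_i is the coefficient form of
   (prod_l U_l)' = (prod_l U_l) sum_l U_l' / U_l.  The CDF follows by integrating the density termwise. *)

unbundle no vec_syntax
unbundle fps_syntax

section \<open>Products of power series and the coefficients delta_i\<close>

lemma fps_deriv_eq_mult_phi_coef:
  fixes u :: "nat \<Rightarrow> real"
  assumes "u 0 \<noteq> 0"
  shows "fps_deriv (Abs_fps u) = Abs_fps u * Abs_fps (phi_coef u)"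
proof (rule fps_ext)
  fix n
  show "fps_deriv (Abs_fps u) $ n = (Abs_fps u * Abs_fps (phi_coef u)) $ n"
  proof (cases n)
    case 0
    then show ?thesis using assms by (simp add: fps_mult_nth)
  next
    case (Suc h)
    have "(Abs_fps u * Abs_fps (phi_coef u)) $ n = (\<Sum>i=0..n. u i * phi_coef u (n - i))"
      by (simp add: fps_mult_nth)
    also have "\<dots> = u 0 * phi_coef u n + (\<Sum>i=1..n. u i * phi_coef u (n - i))"
      by (simp add: sum.atLeast_Suc_atMost)
    also have "u 0 * phi_coef u n = real (Suc h + 1) * u (Suc h + 1)
        - (\<Sum>t = 1..Suc h. u t * phi_coef u (Suc h - t))"
      using assms Suc by simp
    finally show ?thesis using Suc by simp
  qed
qed

lemma fps_deriv_prod_eq_mult_sum: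
  fixes U V :: "'i \<Rightarrow> 'a::comm_ring_1 fps"
  assumes "finite A" "\<And>l. l \<in> A \<Longrightarrow> fps_deriv (U l) = U l * V l"
  shows "fps_deriv (\<Prod>l\<in>A. U l) = (\<Prod>l\<in>A. U l) * (\<Sum>l\<in>A. V l)"
  using assms by (induction A rule: finite_induct) (simp_all add: algebra_simps)

lemma fps_prod_nth_0:
  fixes U :: "'i \<Rightarrow> 'a::comm_semiring_1 fps"
  shows "(\<Prod>l\<in>A. U l) $ 0 = (\<Prod>l\<in>A. U l $ 0)"
  by (induction A rule: infinite_finite_induct) auto

lemma fps_const_prod: "fps_const (\<Prod>i\<in>A. f i) = (\<Prod>i\<in>A. fps_const (f i))"
  by (induction A rule: infinite_finite_induct) (simp_all flip: fps_const_mult)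

lemma delta_coef_eq_fps_prod_nth:
  fixes u :: "nat \<Rightarrow> nat \<Rightarrow> real"
  assumes "\<And>l. l \<in> {1..L} \<Longrightarrow> u l 0 \<noteq> 0"
  shows "delta_coef L (\<lambda>l. u l 0) (\<lambda>l. phi_coef (u l)) n = (\<Prod>l=1..L. Abs_fps (u l)) $ n"
proof (induction n rule: less_induct)
  case (less n)
  define D where "D = (\<Prod>l=1..L. Abs_fps (u l))"
  define S where "S = (\<Sum>l=1..L. Abs_fps (phi_coef (u l)))"
  have D_deriv: "fps_deriv D = D * S"
    unfolding D_def S_def
    by (rule fps_deriv_prod_eq_mult_sum) (simp_all add: fps_deriv_eq_mult_phi_coef assms)
  show ?case
  proof (cases n)
    case 0
    then show ?thesis by (simp add: fps_prod_nth_0)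
  next
    case (Suc m)
    have "(\<Sum>h = 1..Suc m. delta_coef L (\<lambda>l. u l 0) (\<lambda>l. phi_coef (u l)) (Suc m - h)
            * (\<Sum>l = 1..L. phi_coef (u l) (h - 1)))
        = (\<Sum>h = 1..Suc m. D $ (Suc m - h) * S $ (h - 1))"
      using less Suc by (intro sum.cong) (auto simp: D_def S_def fps_sum_nth)
    also have "\<dots> = (\<Sum>i = 0..m. S $ i * D $ (m - i))"
      unfolding One_nat_def sum.atLeast_Suc_atMost_Suc_shift by (simp add: mult.commute)
    also have "\<dots> = (S * D) $ m"
      by (simp add: fps_mult_nth)
    also have "\<dots> = fps_deriv D $ m"
      by (simp add: D_deriv mult.commute)
    finally show ?thesis using Suc by (simp add: D_def)
  qed
qed

section \<open>Termwise integration and some explicit integrals\<close>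

lemma termwise_integral_suminf:
  fixes f :: "nat \<Rightarrow> 'a \<Rightarrow> real"
  assumes f: "\<And>i. has_bochner_integral M (f i) (I i)"
    and sums: "\<And>x. (\<lambda>i. f i x) sums F x"
    and abs_summable: "\<And>x. summable (\<lambda>i. \<bar>f i x\<bar>)"
    and dominated: "summable (\<lambda>i. \<integral>x. \<bar>f i x\<bar> \<partial>M)"
  shows "integrable M F" and "I sums (\<integral>x. F x \<partial>M)"
proof -
  have F: "F = (\<lambda>x. \<Sum>i. f i x)" using sums by (auto simp: sums_iff)
  have int: "integrable M (f i)" for i using f by (rule integrable.intros)
  have I: "I i = integral\<^sup>L M (f i)" for i using has_bochner_integral_integral_eq[OF f] by simp
  show "integrable M F" unfolding F
    by (rule integrable_suminf[OF int]) (use abs_summable dominated in auto)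
  show "I sums (\<integral>x. F x \<partial>M)" unfolding F I
    by (rule sums_integral[OF int]) (use abs_summable dominated in auto)
qed

lemma termwise_integral_weighted_suminf:
  fixes D :: "nat \<Rightarrow> real" and G :: "nat \<Rightarrow> 'a \<Rightarrow> real"
  assumes G: "\<And>i. has_bochner_integral M (G i) (m i)" and G_nonneg: "\<And>i x. 0 \<le> G i x"
    and sums: "\<And>x. (\<lambda>i. D i * G i x) sums F x"
    and abs_sums: "\<And>x. (\<lambda>i. \<bar>D i\<bar> * G i x) sums H x"
    and H: "(\<integral>\<^sup>+x. ennreal (H x) \<partial>M) < \<infinity>"
  shows "integrable M F" and "(\<lambda>i. D i * m i) sums (\<integral>x. F x \<partial>M)" and "summable (\<lambda>i. \<bar>D i\<bar> * m i)"
proof -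
  have G_measurable: "G i \<in> borel_measurable M" for i
    using G by (rule borel_measurable_has_bochner_integral)
  have m_nonneg: "0 \<le> m i" for i
    unfolding has_bochner_integral_integral_eq[OF G[of i], symmetric] using G_nonneg by (simp add: integral_nonneg_AE)
  have "(\<Sum>i. ennreal (\<bar>D i\<bar> * m i)) = (\<Sum>i. \<integral>\<^sup>+x. ennreal (\<bar>D i\<bar> * G i x) \<partial>M)"
  proof (intro suminf_cong)
    fix i
    have "(\<integral>\<^sup>+x. ennreal (G i x) \<partial>M) = ennreal (m i)"
      using G[of i] G_nonneg m_nonneg
      by (simp add: nn_integral_eq_integrable has_bochner_integral_iff G_measurable)
    then show "ennreal (\<bar>D i\<bar> * m i) = (\<integral>\<^sup>+x. ennreal (\<bar>D i\<bar> * G i x) \<partial>M)"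
      using G_nonneg m_nonneg G_measurable by (simp add: ennreal_mult nn_integral_cmult)
  qed
  also have "\<dots> = (\<integral>\<^sup>+x. (\<Sum>i. ennreal (\<bar>D i\<bar> * G i x)) \<partial>M)"
    using G_measurable by (intro nn_integral_suminf[symmetric]) simp
  also have "\<dots> = (\<integral>\<^sup>+x. ennreal (H x) \<partial>M)"
    using abs_sums G_nonneg by (intro nn_integral_cong suminf_ennreal_eq) auto
  finally show abs_summable: "summable (\<lambda>i. \<bar>D i\<bar> * m i)"
    using H m_nonneg by (intro summable_suminf_not_top) auto
  have terms: "has_bochner_integral M (\<lambda>x. D i * G i x) (D i * m i)" for i
    using G by (rule has_bochner_integral_mult_right)
  have abs_terms: "\<bar>D i * G i x\<bar> = \<bar>D i\<bar> * G i x" for i x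
    using G_nonneg by (simp add: abs_mult)
  have abs_integrals: "(\<integral>x. \<bar>D i * G i x\<bar> \<partial>M) = \<bar>D i\<bar> * m i" for i
    unfolding abs_terms using has_bochner_integral_mult_right[OF G] by (rule has_bochner_integral_integral_eq)
  have "summable (\<lambda>i. \<bar>D i * G i x\<bar>)" for x
    unfolding abs_terms by (rule sums_summable[OF abs_sums])
  moreover have "summable (\<lambda>i. \<integral>x. \<bar>D i * G i x\<bar> \<partial>M)"
    unfolding abs_integrals by (rule abs_summable)
  ultimately show "integrable M F" "(\<lambda>i. D i * m i) sums (\<integral>x. F x \<partial>M)"
    by (rule termwise_integral_suminf[OF terms sums])+
qed

lemma nn_integral_indicator_Union_incseq:
  fixes h :: "'a \<Rightarrow> ennreal"
  assumes "incseq A" "\<And>i. A i \<in> sets M" "h \<in> borel_measurable M"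
  shows "(\<integral>\<^sup>+x. h x * indicator (\<Union>i. A i) x \<partial>M) = (SUP i. \<integral>\<^sup>+x. h x * indicator (A i) x \<partial>M)"
proof -
  have "(\<integral>\<^sup>+x. h x * indicator (\<Union>i. A i) x \<partial>M) = emeasure (density M h) (\<Union>i. A i)"
    using assms by (simp add: emeasure_density)
  also have "\<dots> = (SUP i. emeasure (density M h) (A i))"
    using assms by (intro SUP_emeasure_incseq[symmetric]) auto
  finally show ?thesis
    using assms by (simp add: emeasure_density)
qed

lemma incseq_Icc_inverse_Suc: "incseq (\<lambda>n. {1 / real (Suc n)..real (Suc n)})"
  by (force simp: incseq_def field_simps intro: order.trans[rotated])

lemma Union_Icc_inverse_Suc: "(\<Union>n. {1 / real (Suc n)..real (Suc n)}) = {0<..}"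
proof (intro equalityI subsetI)
  fix y :: real assume "y \<in> {0<..}"
  moreover obtain n :: nat where "max y (1 / y) \<le> real n" using real_arch_simple by blast
  ultimately have "y \<in> {1 / real (Suc n)..real (Suc n)}" by (auto simp: field_simps)
  then show "y \<in> (\<Union>n. {1 / real (Suc n)..real (Suc n)})" by blast
qed (auto intro: less_le_trans[rotated])

lemma Union_Icc_image_inverse_Suc:
  fixes g :: "real \<Rightarrow> real"
  assumes mono: "\<And>x y. 0 < x \<Longrightarrow> x \<le> y \<Longrightarrow> g x \<le> g y" and pos: "\<And>y. 0 < y \<Longrightarrow> 0 < g y"
    and at_0: "(g \<longlongrightarrow> 0) (at_right 0)" and at_infinity: "filterlim g at_top at_top"
  shows "incseq (\<lambda>n. {g (1 / real (Suc n))..g (real (Suc n))})"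
    and "(\<Union>n. {g (1 / real (Suc n))..g (real (Suc n))}) = {0<..}"
proof -
  have "g (1 / real (Suc n)) \<le> g (1 / real (Suc m)) \<and> g (real (Suc m)) \<le> g (real (Suc n))" if "m \<le> n" for m n
    using that by (auto intro!: mono simp: field_simps)
  then show "incseq (\<lambda>n. {g (1 / real (Suc n))..g (real (Suc n))})"
    by (force simp: incseq_def)
  show "(\<Union>n. {g (1 / real (Suc n))..g (real (Suc n))}) = {0<..}"
  proof (intro equalityI subsetI)
    fix t :: real assume "t \<in> {0<..}"
    then obtain b where b: "0 < b" "\<And>y. 0 < y \<Longrightarrow> y < b \<Longrightarrow> g y < t"
      using order_tendstoD(2)[OF at_0] by (force simp: eventually_at_right_field)
    obtain N where N: "\<And>y. N \<le> y \<Longrightarrow> t \<le> g y"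
      using at_infinity by (auto simp: filterlim_at_top eventually_at_top_linorder)
    obtain n :: nat where n: "max N (1 / b) \<le> real n" using real_arch_simple by blast
    then have "1 / real (Suc n) < b" "N \<le> real (Suc n)"
      using b by (auto simp: field_simps)
    then have "t \<in> {g (1 / real (Suc n))..g (real (Suc n))}"
      using b(2)[of "1 / real (Suc n)"] N by (auto intro: less_imp_le)
    then show "t \<in> (\<Union>n. {g (1 / real (Suc n))..g (real (Suc n))})" by blast
  next
    fix t assume "t \<in> (\<Union>n. {g (1 / real (Suc n))..g (real (Suc n))})"
    then obtain n where "g (1 / real (Suc n)) \<le> t" by auto
    with pos[of "1 / real (Suc n)"] show "t \<in> {0<..}" by simp
  qed
qed

lemma nn_integral_Ioi_substitution:
  fixes f g g' :: "real \<Rightarrow> real"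
  assumes measurable [measurable]: "f \<in> borel_measurable borel" "g \<in> borel_measurable borel"
      "g' \<in> borel_measurable borel"
    and deriv: "\<And>y. 0 < y \<Longrightarrow> (g has_real_derivative g' y) (at y)"
    and cont: "continuous_on {0<..} g'"
    and nonneg: "\<And>y. 0 < y \<Longrightarrow> 0 \<le> g' y"
    and pos: "\<And>y. 0 < y \<Longrightarrow> 0 < g y"
    and at_0: "(g \<longlongrightarrow> 0) (at_right 0)"
    and at_infinity: "filterlim g at_top at_top"
  shows "(\<integral>\<^sup>+t. ennreal (f t) * indicator {0<..} t \<partial>lborel)
       = (\<integral>\<^sup>+y. ennreal (f (g y) * g' y) * indicator {0<..} y \<partial>lborel)"
proof -
  let ?Y = "\<lambda>n. {1 / real (Suc n)..real (Suc n)}"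
  have g_mono: "g x \<le> g y" if "0 < x" "x \<le> y" for x y
  proof (rule DERIV_nonneg_imp_increasing_open[OF \<open>x \<le> y\<close>])
    show "\<exists>d. (g has_real_derivative d) (at z) \<and> 0 \<le> d" if "x < z" for z
      using that \<open>0 < x\<close> deriv[of z] nonneg[of z] by auto
    show "continuous_on {x..y} g"
      using \<open>0 < x\<close> by (intro continuous_at_imp_continuous_on ballI DERIV_isCont[OF deriv]) auto
  qed
  note T = Union_Icc_image_inverse_Suc[OF g_mono pos at_0 at_infinity]
  have ennreal_indicator: "ennreal (r * indicator A x) = ennreal r * indicator A x" for r A and x :: real
    by (simp split: split_indicator)
  have "(\<integral>\<^sup>+t. ennreal (f t) * indicator {0<..} t \<partial>lborel)
      = (\<integral>\<^sup>+t. ennreal (f t) * indicator (\<Union>n. {g (1 / real (Suc n))..g (real (Suc n))}) t \<partial>lborel)"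
    by (simp only: T(2))
  also have "\<dots> = (SUP n. \<integral>\<^sup>+t. ennreal (f t * indicator {g (1 / real (Suc n))..g (real (Suc n))} t) \<partial>lborel)"
    unfolding ennreal_indicator by (rule nn_integral_indicator_Union_incseq[OF T(1)]) auto
  also have "\<dots> = (SUP n. \<integral>\<^sup>+y. ennreal (f (g y) * g' y * indicator (?Y n) y) \<partial>lborel)"
  proof (intro SUP_cong refl nn_integral_substitution)
    fix n
    have Y_pos: "?Y n \<subseteq> {0<..}" by (auto intro: less_le_trans[rotated])
    then show "continuous_on (?Y n) g'" by (rule continuous_on_subset[OF cont])
    show "(g has_real_derivative g' y) (at y)" "0 \<le> g' y" if "y \<in> ?Y n" for y
      using that Y_pos deriv nonneg by auto
  qed (auto simp: set_borel_measurable_def field_simps)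
  also have "\<dots> = (\<integral>\<^sup>+y. ennreal (f (g y) * g' y) * indicator (\<Union>n. ?Y n) y \<partial>lborel)"
    unfolding ennreal_indicator
    by (rule nn_integral_indicator_Union_incseq[OF incseq_Icc_inverse_Suc, symmetric]) auto
  finally show ?thesis
    by (simp only: Union_Icc_inverse_Suc)
qed

lemma nn_integral_powr_exp_powr:
  fixes r b c :: real
  assumes r: "0 < r" and b: "0 < b" and c: "0 < c"
  shows "(\<integral>\<^sup>+y. ennreal (indicator {0<..} y * (y powr (r - 1) * exp (- c * y powr b))) \<partial>lborel)
       = ennreal (Gamma (r / b) / (b * c powr (r / b)))"
proof -
  define s where "s = r / b"
  have s: "0 < s" using r b by (simp add: s_def)
  define K where "K = b * c powr s"
  have K: "0 < K" using b c by (simp add: K_def)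
  define f where "f t = t powr (s - 1) / exp t" for t :: real
  define g where "g y = c * y powr b" for y :: real
  define g' where "g' y = c * b * y powr (b - 1)" for y :: real
  have fg: "f (g y) * g' y = K * (y powr (r - 1) * exp (- c * y powr b))" if y: "0 < y" for y
  proof -
    have "f (g y) * g' y = b * (c powr (s - 1) * c) * (y powr (b * (s - 1)) * y powr (b - 1))
        / exp (c * y powr b)"
      using y c by (simp add: f_def g_def g'_def powr_mult powr_powr)
    also have "c powr (s - 1) * c = c powr s"
      using c by (simp add: powr_diff)
    also have "y powr (b * (s - 1)) * y powr (b - 1) = y powr (r - 1)"
      using b by (simp add: powr_add[symmetric] s_def algebra_simps)
    finally show ?thesis by (simp add: K_def exp_minus field_simps)
  qed
  let ?I = "\<integral>\<^sup>+y. ennreal (indicator {0<..} y * (y powr (r - 1) * exp (- c * y powr b))) \<partial>lborel"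
  have "ennreal (Gamma s) = (\<integral>\<^sup>+t. ennreal (f t) * indicator {0<..} t \<partial>lborel)"
    unfolding Gamma_conv_nn_integral_real[OF s]
    by (intro nn_integral_cong) (auto simp: f_def split: split_indicator)
  also have "\<dots> = (\<integral>\<^sup>+y. ennreal (f (g y) * g' y) * indicator {0<..} y \<partial>lborel)"
  proof (rule nn_integral_Ioi_substitution)
    show "(g has_real_derivative g' y) (at y)" if "0 < y" for y
      using that unfolding g_def g'_def by (auto intro!: derivative_eq_intros simp: algebra_simps)
    show "(g \<longlongrightarrow> 0) (at_right 0)"
      unfolding g_def using b
      by (intro tendsto_mult_right_zero tendsto_zero_powrI tendsto_ident_at)
         (auto simp: eventually_at_right_field)
    show "filterlim g at_top at_top"
      unfolding g_def using b c
      by (intro filterlim_tendsto_pos_mult_at_top[OF tendsto_const] real_powr_at_top)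
  qed (use b c in \<open>auto simp: f_def g_def g'_def intro!: continuous_intros\<close>)
  also have "\<dots> = ennreal K * ?I"
    using K by (subst nn_integral_cmult[symmetric])
       (auto intro!: nn_integral_cong simp: fg ennreal_mult split: split_indicator)
  finally have "ennreal (1 / K) * ennreal (Gamma s) = ennreal (1 / K) * ennreal K * ?I"
    by (simp add: mult.assoc)
  also have "ennreal (1 / K) * ennreal K = 1"
    using K by (simp add: ennreal_mult[symmetric])
  finally show ?thesis
    using K s by (simp add: ennreal_mult[symmetric] s_def K_def)
qed

lemma powr_le_const_plus_powr:
  fixes a b k c :: real
  assumes a: "0 < a" and ab: "a < b" and k: "0 \<le> k" and c: "0 < c"
  obtains K where "\<And>y. 0 < y \<Longrightarrow> k * y powr a \<le> K + c * y powr b"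
proof
  define y0 where "y0 = (k / c) powr (1 / (b - a))"
  fix y :: real assume y: "0 < y"
  show "k * y powr a \<le> k * y0 powr a + c * y powr b"
  proof (cases "k / c \<le> y powr (b - a)")
    case True
    then have "k * y powr a \<le> c * y powr (b - a) * y powr a"
      using c by (intro mult_right_mono) (auto simp: field_simps)
    also have "\<dots> = c * y powr b"
      by (simp add: mult.assoc powr_add[symmetric])
    finally show ?thesis using k by (simp add: add_increasing)
  next
    case False
    have "y = (y powr (b - a)) powr (1 / (b - a))" using y ab by (simp add: powr_powr)
    also have "\<dots> < y0"
      using False ab unfolding y0_def by (intro powr_less_mono2) auto
    finally have "k * y powr a \<le> k * y0 powr a"
      using y a k by (intro mult_left_mono powr_mono2) auto
    then show ?thesis using c by (simp add: add_increasing2)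
  qed
qed

lemma nn_integral_powr_exp_powr_finite:
  fixes r a b k c :: real
  assumes r: "0 < r" and a: "0 < a" and ab: "a < b" and k: "0 \<le> k" and c: "0 < c"
  shows "(\<integral>\<^sup>+y. ennreal (indicator {0<..} y * (y powr (r - 1) * exp (k * y powr a - c * y powr b))) \<partial>lborel) < \<infinity>"
proof -
  obtain K where K: "\<And>y. 0 < y \<Longrightarrow> k * y powr a \<le> K + c / 2 * y powr b"
    using powr_le_const_plus_powr[OF a ab k, of "c / 2"] c by auto
  have "(\<integral>\<^sup>+y. ennreal (indicator {0<..} y * (y powr (r - 1) * exp (k * y powr a - c * y powr b))) \<partial>lborel)
      \<le> (\<integral>\<^sup>+y. ennreal (exp K) * ennreal (indicator {0<..} y * (y powr (r - 1) * exp (- (c / 2) * y powr b))) \<partial>lborel)"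
  proof (intro nn_integral_mono)
    fix y :: real
    have "exp (k * y powr a - c * y powr b) \<le> exp K * exp (- (c / 2) * y powr b)" if "0 < y"
      using K[OF that] by (simp add: exp_add[symmetric])
    then show "ennreal (indicator {0<..} y * (y powr (r - 1) * exp (k * y powr a - c * y powr b)))
        \<le> ennreal (exp K) * ennreal (indicator {0<..} y * (y powr (r - 1) * exp (- (c / 2) * y powr b)))"
      by (auto simp: ennreal_mult[symmetric] mult_left_mono split: split_indicator)
  qed
  also have "\<dots> = ennreal (exp K) * ennreal (Gamma (r / b) / (b * (c / 2) powr (r / b)))"
    using r a ab c nn_integral_powr_exp_powr[of r b "c / 2"] by (simp add: nn_integral_cmult)
  also have "\<dots> < \<infinity>"
    by (simp add: ennreal_mult_less_top)
  finally show ?thesis .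
qed

lemma sums_exp_powr_series:
  fixes a r t y \<kappa> :: real
  assumes y: "0 < y" and t: "0 < t"
  shows "(\<lambda>i. (\<kappa> * t powr a) ^ i / fact i * y powr (a * real i + r - 1))
           sums (y powr (r - 1) * exp (\<kappa> * (t * y) powr a))"
proof -
  have "(\<lambda>i. y powr (r - 1) * ((\<kappa> * (t * y) powr a) ^ i / fact i)) sums (y powr (r - 1) * exp (\<kappa> * (t * y) powr a))"
    using exp_converges[of "\<kappa> * (t * y) powr a"] by (intro sums_mult) (simp add: divide_inverse_commute scaleR_conv_of_real)
  moreover have "y powr (r - 1) * (\<kappa> * (t * y) powr a) ^ i = (\<kappa> * t powr a) ^ i * y powr (a * real i + r - 1)" for i
  proof -
    have "y powr (r - 1) * (y powr a) ^ i = y powr (a * real i + r - 1)"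
      using y by (simp add: powr_power powr_add[symmetric] algebra_simps)
    then show ?thesis
      using y t by (simp add: powr_mult power_mult_distrib mult_ac)
  qed
  ultimately show ?thesis
    by (simp add: mult_ac times_divide_eq_right)
qed

lemma integral_exp_powr_series:
  fixes a b c k r t C :: real
  assumes a: "0 < a" and ab: "a < b" and r: "0 < r" and C: "0 \<le> C" and c: "0 \<le> c" and k: "0 < k"
    and t: "0 < t"
  defines "F \<equiv> \<lambda>y. indicator {0<..} y * (C * (y powr (r - 1) * exp (- c * (t * y) powr a)) * exp (- k * y powr b))"
    and "D \<equiv> \<lambda>i. C * (- c * t powr a) ^ i / fact i"
    and "m \<equiv> \<lambda>i. Gamma ((a * real i + r) / b) / (b * k powr ((a * real i + r) / b))"
  shows "integrable lborel F" and "(\<lambda>i. D i * m i) sums (\<integral>y. F y \<partial>lborel)"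
    and "summable (\<lambda>i. \<bar>D i * m i\<bar>)"
proof -
  have b: "0 < b" using a ab by simp
  have D_eq: "D i = C * (- c * t powr a) ^ i / fact i" for i
    by (simp add: D_def)
  have F_eq: "F y = indicator {0<..} y * (C * (y powr (r - 1) * exp (- c * (t * y) powr a)) * exp (- k * y powr b))" for y
    by (simp add: F_def)
  define G where "G i y = indicator {0<..} y * (y powr (a * real i + r - 1) * exp (- k * y powr b))" for i y
  define H where "H y = indicator {0<..} y * (C * (y powr (r - 1) * exp (c * (t * y) powr a)) * exp (- k * y powr b))" for y
  have "G i \<in> borel_measurable borel" for i
    unfolding G_def by measurable
  then have G: "has_bochner_integral lborel (G i) (m i)" for i
    using nn_integral_powr_exp_powr[of "a * real i + r" b k] a r b k
    by (intro has_bochner_integral_nn_integral)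
       (auto simp: G_def m_def Gamma_real_pos less_imp_le add_nonneg_pos split: split_indicator)
  have series: "(\<lambda>i. C * (\<kappa> * t powr a) ^ i / fact i * G i y)
      sums (indicator {0<..} y * (C * (y powr (r - 1) * exp (\<kappa> * (t * y) powr a)) * exp (- k * y powr b)))" for \<kappa> y
    using sums_mult2[OF sums_mult[OF sums_exp_powr_series[OF _ t, of y \<kappa> a r]], of C "exp (- k * y powr b)"]
    by (cases "0 < y") (simp_all add: G_def mult_ac)
  have "\<bar>D i\<bar> = C * (c * t powr a) ^ i / fact i" for i
    using C c t by (simp add: D_def abs_mult power_abs)
  (* H is the sum of the absolute series; it is integrable only because a < b. *)
  moreover have "(\<integral>\<^sup>+y. ennreal (H y) \<partial>lborel) < \<infinity>"
  proof -
    have "(\<integral>\<^sup>+y. ennreal (H y) \<partial>lborel) = ennreal C * (\<integral>\<^sup>+y. ennreal (indicator {0<..} y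
        * (y powr (r - 1) * exp (c * t powr a * y powr a - k * y powr b))) \<partial>lborel)"
      using C t by (subst nn_integral_cmult[symmetric])
         (auto intro!: nn_integral_cong simp: H_def ennreal_mult[symmetric] powr_mult exp_diff exp_minus
          field_simps split: split_indicator)
    also have "\<dots> < \<infinity>"
      using nn_integral_powr_exp_powr_finite[OF r a ab _ k, of "c * t powr a"] c t
      by (simp add: ennreal_mult_less_top)
    finally show ?thesis .
  qed
  ultimately have "integrable lborel F" "(\<lambda>i. D i * m i) sums (\<integral>y. F y \<partial>lborel)"
    and abs_summable: "summable (\<lambda>i. \<bar>D i\<bar> * m i)"
    using termwise_integral_weighted_suminf[OF G _ series[of "- c", folded D_eq F_eq]]
      series[of c, folded H_def] by (auto simp: G_def)
  moreover have "\<bar>D i * m i\<bar> = \<bar>D i\<bar> * m i" for i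
    using a r b k by (simp add: m_def abs_mult Gamma_real_pos less_imp_le add_nonneg_pos)
  ultimately show "integrable lborel F" "(\<lambda>i. D i * m i) sums (\<integral>y. F y \<partial>lborel)"
    and "summable (\<lambda>i. \<bar>D i * m i\<bar>)"
    by simp_all
qed

lemma has_bochner_integral_beta_convolution:
  fixes x w z :: real
  assumes x: "0 < x" and w: "0 < w" and z: "0 < z"
  shows "has_bochner_integral lborel
           (\<lambda>y. indicator {0<..<z} y * ((z - y) powr (x - 1) * y powr (w - 1))) (z powr (x + w - 1) * Beta x w)"
proof (rule has_bochner_integral_nn_integral)
  have Beta_nonneg: "0 \<le> Beta x w" "0 \<le> Beta w x"
    using x w by (simp_all add: Beta_def Gamma_real_pos less_imp_le)
  have scale: "indicator {0<..<z} (z * t) * ((z - z * t) powr (x - 1) * (z * t) powr (w - 1))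
      = z powr (x + w - 2) * (indicator {0<..<1} t * (t powr (w - 1) * (1 - t) powr (x - 1)))" for t
  proof (cases "0 < t \<and> t < 1")
    case True
    have "z - z * t = z * (1 - t)" by (simp add: algebra_simps)
    then have "(z - z * t) powr (x - 1) * (z * t) powr (w - 1)
        = (z powr (x - 1) * z powr (w - 1)) * (t powr (w - 1) * (1 - t) powr (x - 1))"
      using True z by (simp add: powr_mult)
    also have "z powr (x - 1) * z powr (w - 1) = z powr (x + w - 2)"
      by (simp add: powr_add[symmetric])
    finally show ?thesis using True z by simp
  next
    case False
    then show ?thesis using z by (auto simp: zero_less_mult_iff)
  qed
  have beta: "(\<integral>\<^sup>+t. ennreal (indicator {0<..<1} t * (t powr (w - 1) * (1 - t) powr (x - 1))) \<partial>lborel)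
      = ennreal (Beta w x)"
    using has_integral_Beta_real[OF w x]
    by (intro nn_integral_has_integral_lebesgue) (auto simp: has_integral_Icc_iff_Ioo)
  have "(\<integral>\<^sup>+y. ennreal (indicator {0<..<z} y * ((z - y) powr (x - 1) * y powr (w - 1))) \<partial>lborel)
      = ennreal z * (\<integral>\<^sup>+t. ennreal (z powr (x + w - 2)
          * (indicator {0<..<1} t * (t powr (w - 1) * (1 - t) powr (x - 1)))) \<partial>lborel)"
    using z by (subst nn_integral_real_affine[where c = z and t = 0]) (auto simp: scale)
  also have "\<dots> = ennreal z * (ennreal (z powr (x + w - 2)) * ennreal (Beta w x))"
    by (simp add: ennreal_mult'[of "z powr (x + w - 2)"] nn_integral_cmult beta)
  also have "\<dots> = ennreal (z powr (x + w - 1) * Beta x w)"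
    using z Beta_nonneg powr_add[of z 1 "x + w - 2"]
    by (simp add: ennreal_mult[symmetric] Beta_commute mult.assoc)
  finally show "(\<integral>\<^sup>+y. ennreal (indicator {0<..<z} y * ((z - y) powr (x - 1) * y powr (w - 1))) \<partial>lborel)
      = ennreal (z powr (x + w - 1) * Beta x w)" .
  show "0 \<le> z powr (x + w - 1) * Beta x w"
    using Beta_nonneg by simp
qed (auto split: split_indicator)

lemma has_bochner_integral_powr_Ioc:
  fixes s z :: real
  assumes s: "0 < s" and z: "0 \<le> z"
  shows "has_bochner_integral lborel (\<lambda>t. indicator {0<..z} t * t powr (s - 1)) (z powr s / s)"
proof (rule has_bochner_integral_nn_integral)
  have "(\<integral>\<^sup>+t. ennreal (indicator {0<..z} t * t powr (s - 1)) \<partial>lborel)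
      = (\<integral>\<^sup>+t. ennreal (indicator {0..z} t * t powr (s - 1)) \<partial>lborel)"
    by (intro nn_integral_cong) (auto split: split_indicator)
  also have "\<dots> = ennreal (z powr (s - 1 + 1) / (s - 1 + 1))"
    by (rule nn_integral_has_integral_lebesgue) (use has_integral_powr_from_0[of "s - 1" z] s z in auto)
  finally show "(\<integral>\<^sup>+t. ennreal (indicator {0<..z} t * t powr (s - 1)) \<partial>lborel) = ennreal (z powr s / s)"
    by simp
qed (use s in \<open>auto split: split_indicator\<close>)

section \<open>Gamma series\<close>

definition gamma_kernel :: "real \<Rightarrow> real \<Rightarrow> real" where
  "gamma_kernel s z = z powr (s - 1) / Gamma s"

definition gamma_series :: "real \<Rightarrow> real fps \<Rightarrow> real \<Rightarrow> real \<Rightarrow> real" where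
  "gamma_series \<alpha> a \<beta> z = (\<Sum>i. a $ i * gamma_kernel (real i * \<alpha> + \<beta>) z)"

definition gamma_series_abs_summable :: "real \<Rightarrow> real fps \<Rightarrow> real \<Rightarrow> bool" where
  "gamma_series_abs_summable \<alpha> a \<beta> \<longleftrightarrow>
     (\<forall>z>0. summable (\<lambda>i. \<bar>a $ i\<bar> * gamma_kernel (real i * \<alpha> + \<beta>) z))"

definition gamma_series_pdf :: "real \<Rightarrow> real fps \<Rightarrow> real \<Rightarrow> real \<Rightarrow> ennreal" where
  "gamma_series_pdf \<alpha> a \<beta> z = ennreal (if 0 < z then gamma_series \<alpha> a \<beta> z else 0)"

lemma gamma_kernel_nonneg: "0 < s \<Longrightarrow> 0 \<le> gamma_kernel s z"
  by (simp add: gamma_kernel_def Gamma_real_pos less_imp_le)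

lemma Gamma_real_plus1: "0 < s \<Longrightarrow> Gamma (s + 1) = s * Gamma (s :: real)"
  using Gamma_plus1[of s] nonpos_Ints_nonpos[of s] by (force simp: add.commute)

lemma gamma_kernel_plus1:
  assumes "0 < s" "0 \<le> z"
  shows "gamma_kernel (s + 1) z = z / s * gamma_kernel s z"
proof -
  have "Gamma (s + 1) = s * Gamma s"
    using assms(1) by (rule Gamma_real_plus1)
  moreover have "z powr s = z * z powr (s - 1)"
    using assms powr_add[of z 1 "s - 1"] by (cases "z = 0") auto
  ultimately show ?thesis
    using assms by (simp add: gamma_kernel_def)
qed

lemma has_bochner_integral_gamma_kernel_Ioc:
  assumes "0 < s" "0 \<le> z"
  shows "has_bochner_integral lborel (\<lambda>t. indicator {0<..z} t * gamma_kernel s t) (gamma_kernel (s + 1) z)"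
proof -
  have "Gamma (s + 1) = s * Gamma s"
    using assms(1) by (rule Gamma_real_plus1)
  then show ?thesis
    using has_bochner_integral_mult_right[OF has_bochner_integral_powr_Ioc[OF assms], of "1 / Gamma s"]
    by (simp add: gamma_kernel_def mult_ac)
qed

lemma gamma_kernel_mult_Beta:
  fixes x w z :: real
  assumes "0 < x" "0 < w" "0 < z"
  shows "gamma_kernel (x + w) z = z * Beta x w * gamma_kernel x z * gamma_kernel w z"
proof -
  have "z powr (x + w - 1) = z powr (x - 1) * z powr (w - 1) * z"
    using powr_add[of z "x - 1 + (w - 1)" 1] powr_add[of z "x - 1" "w - 1"] assms(3)
    by (simp add: algebra_simps)
  then show ?thesis
    using Gamma_real_pos[OF assms(1)] Gamma_real_pos[OF assms(2)] Gamma_real_pos[of "x + w"] assms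
    by (simp add: gamma_kernel_def Beta_def field_simps less_imp_neq[symmetric] add.commute)
qed

lemma has_bochner_integral_gamma_kernel_convolution:
  fixes x w z :: real
  assumes x: "0 < x" and w: "0 < w" and z: "0 < z"
  shows "has_bochner_integral lborel
           (\<lambda>y. indicator {0<..<z} y * (gamma_kernel x (z - y) * gamma_kernel w y)) (gamma_kernel (x + w) z)"
proof -
  have "has_bochner_integral lborel
      (\<lambda>y. 1 / (Gamma x * Gamma w) * (indicator {0<..<z} y * ((z - y) powr (x - 1) * y powr (w - 1))))
      (1 / (Gamma x * Gamma w) * (z powr (x + w - 1) * Beta x w))"
    by (intro has_bochner_integral_mult_right has_bochner_integral_beta_convolution x w z)
  then show ?thesis
    using Gamma_real_pos[OF x] Gamma_real_pos[OF w]
    by (simp add: gamma_kernel_def Beta_def mult_ac)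
qed

lemma gamma_kernel_add_le:
  fixes x w z :: real
  assumes "0 < \<beta>" "\<beta> \<le> x" "0 < \<gamma>" "\<gamma> \<le> w" "0 < z"
  shows "gamma_kernel (x + w) z \<le> z * Beta \<beta> \<gamma> * (gamma_kernel x z * gamma_kernel w z)"
proof -
  have "gamma_kernel (x + w) z = z * Beta x w * (gamma_kernel x z * gamma_kernel w z)"
    using assms by (simp add: gamma_kernel_mult_Beta)
  also have "\<dots> \<le> z * Beta \<beta> \<gamma> * (gamma_kernel x z * gamma_kernel w z)"
    using assms gamma_kernel_nonneg[of x z] gamma_kernel_nonneg[of w z]
    by (intro mult_right_mono mult_left_mono Beta_real_mono) auto
  finally show ?thesis .
qed

lemma gamma_series_abs_summable_abs:
  "gamma_series_abs_summable \<alpha> (Abs_fps (\<lambda>i. \<bar>a $ i\<bar>)) \<beta> = gamma_series_abs_summable \<alpha> a \<beta>"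
  by (simp add: gamma_series_abs_summable_def)

lemma gamma_series_abs_summable_mult:
  assumes \<alpha>: "0 < \<alpha>" and \<beta>: "0 < \<beta>" and \<gamma>: "0 < \<gamma>"
    and a: "gamma_series_abs_summable \<alpha> a \<beta>" and b: "gamma_series_abs_summable \<alpha> b \<gamma>"
  shows "gamma_series_abs_summable \<alpha> (a * b) (\<beta> + \<gamma>)"
  unfolding gamma_series_abs_summable_def
proof (intro allI impI)
  fix z :: real assume z: "0 < z"
  define A where "A i = \<bar>a $ i\<bar> * gamma_kernel (real i * \<alpha> + \<beta>) z" for i
  define B where "B j = \<bar>b $ j\<bar> * gamma_kernel (real j * \<alpha> + \<gamma>) z" for j
  have A: "0 \<le> A i" and B: "0 \<le> B i" for i
    using \<alpha> \<beta> \<gamma> by (simp_all add: A_def B_def gamma_kernel_nonneg add_nonneg_pos)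
  have "summable (\<lambda>k. \<Sum>i\<le>k. A i * B (k - i))"
    using a b z A B by (intro summable_Cauchy_product) (simp_all add: gamma_series_abs_summable_def A_def B_def)
  then have "summable (\<lambda>k. z * Beta \<beta> \<gamma> * (\<Sum>i\<le>k. A i * B (k - i)))"
    by (rule summable_mult)
  then show "summable (\<lambda>n. \<bar>(a * b) $ n\<bar> * gamma_kernel (real n * \<alpha> + (\<beta> + \<gamma>)) z)"
  proof (rule summable_comparison_test'[where N = 0])
    fix n :: nat
    have kernel_le: "gamma_kernel (real n * \<alpha> + (\<beta> + \<gamma>)) z
        \<le> z * Beta \<beta> \<gamma> * (gamma_kernel (real i * \<alpha> + \<beta>) z * gamma_kernel (real (n - i) * \<alpha> + \<gamma>) z)"
      if "i \<le> n" for i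
      using gamma_kernel_add_le[of \<beta> "real i * \<alpha> + \<beta>" \<gamma> "real (n - i) * \<alpha> + \<gamma>" z] that \<alpha> \<beta> \<gamma> z
      by (simp add: of_nat_diff algebra_simps)
    have "\<bar>(a * b) $ n\<bar> \<le> (\<Sum>i\<le>n. \<bar>a $ i\<bar> * \<bar>b $ (n - i)\<bar>)"
      unfolding fps_mult_nth atLeast0AtMost by (rule order.trans[OF sum_abs]) (simp add: abs_mult)
    then have "\<bar>(a * b) $ n\<bar> * gamma_kernel (real n * \<alpha> + (\<beta> + \<gamma>)) z
        \<le> (\<Sum>i\<le>n. \<bar>a $ i\<bar> * \<bar>b $ (n - i)\<bar> * gamma_kernel (real n * \<alpha> + (\<beta> + \<gamma>)) z)"
      unfolding sum_distrib_right[symmetric]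
      by (rule mult_right_mono) (use \<alpha> \<beta> \<gamma> in \<open>simp_all add: gamma_kernel_nonneg add_nonneg_pos\<close>)
    also have "\<dots> \<le> z * Beta \<beta> \<gamma> * (\<Sum>i\<le>n. A i * B (n - i))"
      unfolding sum_distrib_left
    proof (intro sum_mono)
      fix i assume "i \<in> {..n}"
      then have "\<bar>a $ i\<bar> * \<bar>b $ (n - i)\<bar> * gamma_kernel (real n * \<alpha> + (\<beta> + \<gamma>)) z
          \<le> \<bar>a $ i\<bar> * \<bar>b $ (n - i)\<bar> * (z * Beta \<beta> \<gamma> * (gamma_kernel (real i * \<alpha> + \<beta>) z
              * gamma_kernel (real (n - i) * \<alpha> + \<gamma>) z))"
        by (intro mult_left_mono kernel_le) auto
      then show "\<bar>a $ i\<bar> * \<bar>b $ (n - i)\<bar> * gamma_kernel (real n * \<alpha> + (\<beta> + \<gamma>)) z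
          \<le> z * Beta \<beta> \<gamma> * (A i * B (n - i))"
        by (simp add: A_def B_def mult_ac)
    qed
    finally show "norm (\<bar>(a * b) $ n\<bar> * gamma_kernel (real n * \<alpha> + (\<beta> + \<gamma>)) z)
        \<le> z * Beta \<beta> \<gamma> * (\<Sum>i\<le>n. A i * B (n - i))"
      using \<alpha> \<beta> \<gamma> by (simp add: gamma_kernel_nonneg add_nonneg_pos)
  qed
qed

lemma has_bochner_integral_gamma_series_convolution_term:
  assumes \<alpha>: "0 < \<alpha>" and \<beta>: "0 < \<beta>" and \<gamma>: "0 < \<gamma>" and z: "0 < z"
  shows "has_bochner_integral lborel
     (\<lambda>y. indicator {0<..<z} y * (\<Sum>i\<le>n. (a $ i * gamma_kernel (real i * \<alpha> + \<beta>) (z - y))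
            * (b $ (n - i) * gamma_kernel (real (n - i) * \<alpha> + \<gamma>) y)))
     ((a * b) $ n * gamma_kernel (real n * \<alpha> + (\<beta> + \<gamma>)) z)"
proof -
  have "has_bochner_integral lborel
     (\<lambda>y. \<Sum>i\<le>n. a $ i * b $ (n - i) * (indicator {0<..<z} y
        * (gamma_kernel (real i * \<alpha> + \<beta>) (z - y) * gamma_kernel (real (n - i) * \<alpha> + \<gamma>) y)))
     (\<Sum>i\<le>n. a $ i * b $ (n - i) * gamma_kernel (real i * \<alpha> + \<beta> + (real (n - i) * \<alpha> + \<gamma>)) z)"
    using \<alpha> \<beta> \<gamma> z
    by (intro has_bochner_integral_sum has_bochner_integral_mult_right
        has_bochner_integral_gamma_kernel_convolution add_nonneg_pos) auto
  moreover have "(\<Sum>i\<le>n. a $ i * b $ (n - i) * gamma_kernel (real i * \<alpha> + \<beta> + (real (n - i) * \<alpha> + \<gamma>)) z)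
      = (a * b) $ n * gamma_kernel (real n * \<alpha> + (\<beta> + \<gamma>)) z"
    unfolding fps_mult_nth atLeast0AtMost sum_distrib_right
    by (intro sum.cong refl) (simp add: of_nat_diff algebra_simps)
  ultimately show ?thesis
    by (simp add: sum_distrib_left mult_ac)
qed

lemma gamma_series_Cauchy_product:
  assumes \<alpha>: "0 < \<alpha>" and \<beta>: "0 < \<beta>" and \<gamma>: "0 < \<gamma>"
    and a: "gamma_series_abs_summable \<alpha> a \<beta>" and b: "gamma_series_abs_summable \<alpha> b \<gamma>"
    and x: "0 < x" and y: "0 < y"
  defines "A \<equiv> \<lambda>i. a $ i * gamma_kernel (real i * \<alpha> + \<beta>) x"
    and "B \<equiv> \<lambda>j. b $ j * gamma_kernel (real j * \<alpha> + \<gamma>) y"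
  shows "(\<lambda>n. \<Sum>i\<le>n. A i * B (n - i)) sums (gamma_series \<alpha> a \<beta> x * gamma_series \<alpha> b \<gamma> y)"
    and "summable (\<lambda>n. \<bar>\<Sum>i\<le>n. A i * B (n - i)\<bar>)"
proof -
  have "summable (\<lambda>i. norm (A i))" "summable (\<lambda>i. norm (B i))"
    using a b x y \<alpha> \<beta> \<gamma>
    by (simp_all add: gamma_series_abs_summable_def A_def B_def abs_mult gamma_kernel_nonneg add_nonneg_pos)
  then have "(\<lambda>n. \<Sum>i\<le>n. A i * B (n - i)) sums ((\<Sum>i. A i) * (\<Sum>i. B i))"
      and norms: "summable (\<lambda>n. \<Sum>i\<le>n. norm (A i) * norm (B (n - i)))"
    by (auto intro: Cauchy_product_sums summable_Cauchy_product)
  then show "(\<lambda>n. \<Sum>i\<le>n. A i * B (n - i)) sums (gamma_series \<alpha> a \<beta> x * gamma_series \<alpha> b \<gamma> y)"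
    by (simp add: A_def B_def gamma_series_def)
  show "summable (\<lambda>n. \<bar>\<Sum>i\<le>n. A i * B (n - i)\<bar>)"
    using norms by (rule summable_comparison_test'[where N = 0]) (auto simp: abs_mult intro: order.trans[OF sum_abs])
qed

lemma gamma_series_convolution_integrable:
  assumes \<alpha>: "0 < \<alpha>" and \<beta>: "0 < \<beta>" and \<gamma>: "0 < \<gamma>"
    and a: "gamma_series_abs_summable \<alpha> a \<beta>" and b: "gamma_series_abs_summable \<alpha> b \<gamma>"
    and z: "0 < z"
  defines "F \<equiv> \<lambda>y. indicator {0<..<z} y * (gamma_series \<alpha> a \<beta> (z - y) * gamma_series \<alpha> b \<gamma> y)"
  shows "integrable lborel F"
    and "(\<lambda>n. (a * b) $ n * gamma_kernel (real n * \<alpha> + (\<beta> + \<gamma>)) z) sums (\<integral>y. F y \<partial>lborel)"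
proof -
  define A where "A i y = a $ i * gamma_kernel (real i * \<alpha> + \<beta>) (z - y)" for i y
  define B where "B j y = b $ j * gamma_kernel (real j * \<alpha> + \<gamma>) y" for j y
  define T where "T n y = indicator {0<..<z} y * (\<Sum>i\<le>n. A i y * B (n - i) y)" for n y
  let ?a = "Abs_fps (\<lambda>i. \<bar>a $ i\<bar>)" and ?b = "Abs_fps (\<lambda>i. \<bar>b $ i\<bar>)"
  have kernel_nonneg: "0 \<le> gamma_kernel (real i * \<alpha> + \<delta>) x" if "0 < \<delta>" for i \<delta> x
    using \<alpha> that by (simp add: gamma_kernel_nonneg add_nonneg_pos)
  have T: "has_bochner_integral lborel (T n) ((a * b) $ n * gamma_kernel (real n * \<alpha> + (\<beta> + \<gamma>)) z)" for n
    unfolding T_def A_def B_def by (rule has_bochner_integral_gamma_series_convolution_term[OF \<alpha> \<beta> \<gamma> z])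
  have T_abs: "has_bochner_integral lborel (\<lambda>y. indicator {0<..<z} y * (\<Sum>i\<le>n. \<bar>A i y\<bar> * \<bar>B (n - i) y\<bar>))
      ((?a * ?b) $ n * gamma_kernel (real n * \<alpha> + (\<beta> + \<gamma>)) z)" for n
    using has_bochner_integral_gamma_series_convolution_term[OF \<alpha> \<beta> \<gamma> z, where a = ?a and b = ?b and n = n]
      kernel_nonneg[OF \<beta>] kernel_nonneg[OF \<gamma>] by (simp add: A_def B_def abs_mult del: of_nat_diff)
  have "(\<lambda>n. T n y) sums F y \<and> summable (\<lambda>n. \<bar>T n y\<bar>)" for y
    using gamma_series_Cauchy_product[OF \<alpha> \<beta> \<gamma> a b, of "z - y" y]
    by (cases "y \<in> {0<..<z}") (simp_all add: T_def F_def A_def B_def)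
  moreover have "summable (\<lambda>n. \<integral>y. \<bar>T n y\<bar> \<partial>lborel)"
  proof (rule summable_comparison_test'[where N = 0])
    show "summable (\<lambda>n. \<bar>(?a * ?b) $ n\<bar> * gamma_kernel (real n * \<alpha> + (\<beta> + \<gamma>)) z)"
      using gamma_series_abs_summable_mult[OF \<alpha> \<beta> \<gamma>] a b z
      by (simp add: gamma_series_abs_summable_abs gamma_series_abs_summable_def)
    fix n
    have "(\<integral>y. \<bar>T n y\<bar> \<partial>lborel) \<le> (\<integral>y. indicator {0<..<z} y * (\<Sum>i\<le>n. \<bar>A i y\<bar> * \<bar>B (n - i) y\<bar>) \<partial>lborel)"
      by (intro integral_mono integrable_abs integrable.intros[OF T_abs] integrable.intros[OF T])
         (auto simp: T_def abs_mult intro: order.trans[OF sum_abs] split: split_indicator)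
    also have "\<dots> = (?a * ?b) $ n * gamma_kernel (real n * \<alpha> + (\<beta> + \<gamma>)) z"
      using T_abs by (rule has_bochner_integral_integral_eq)
    finally show "norm (\<integral>y. \<bar>T n y\<bar> \<partial>lborel) \<le> \<bar>(?a * ?b) $ n\<bar> * gamma_kernel (real n * \<alpha> + (\<beta> + \<gamma>)) z"
      by (simp add: fps_mult_nth sum_nonneg)
  qed
  ultimately show "integrable lborel F"
    and "(\<lambda>n. (a * b) $ n * gamma_kernel (real n * \<alpha> + (\<beta> + \<gamma>)) z) sums (\<integral>y. F y \<partial>lborel)"
    using termwise_integral_suminf[where f = T and F = F, OF T] by auto
qed

lemma gamma_series_convolution:
  assumes \<alpha>: "0 < \<alpha>" and \<beta>: "0 < \<beta>" and \<gamma>: "0 < \<gamma>"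
    and a: "gamma_series_abs_summable \<alpha> a \<beta>" and b: "gamma_series_abs_summable \<alpha> b \<gamma>"
    and a_nonneg: "\<And>x. 0 < x \<Longrightarrow> 0 \<le> gamma_series \<alpha> a \<beta> x"
    and b_nonneg: "\<And>x. 0 < x \<Longrightarrow> 0 \<le> gamma_series \<alpha> b \<gamma> x"
    and z: "0 < z"
  shows "(\<integral>\<^sup>+y. gamma_series_pdf \<alpha> a \<beta> (z - y) * gamma_series_pdf \<alpha> b \<gamma> y \<partial>lborel)
           = ennreal (gamma_series \<alpha> (a * b) (\<beta> + \<gamma>) z)"
    and "0 \<le> gamma_series \<alpha> (a * b) (\<beta> + \<gamma>) z"
proof -
  define F where "F y = indicator {0<..<z} y * (gamma_series \<alpha> a \<beta> (z - y) * gamma_series \<alpha> b \<gamma> y)" for y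
  note F = gamma_series_convolution_integrable[OF \<alpha> \<beta> \<gamma> a b z, folded F_def]
  have F_nonneg: "0 \<le> F y" for y
    using a_nonneg[of "z - y"] b_nonneg[of y] by (simp add: F_def split: split_indicator)
  have "(\<integral>\<^sup>+y. gamma_series_pdf \<alpha> a \<beta> (z - y) * gamma_series_pdf \<alpha> b \<gamma> y \<partial>lborel) = (\<integral>\<^sup>+y. ennreal (F y) \<partial>lborel)"
    using a_nonneg b_nonneg
    by (intro nn_integral_cong) (simp add: gamma_series_pdf_def F_def ennreal_mult split: split_indicator)
  also have "\<dots> = ennreal (integral\<^sup>L lborel F)"
    using F F_nonneg by (simp add: nn_integral_eq_integral)
  finally show "(\<integral>\<^sup>+y. gamma_series_pdf \<alpha> a \<beta> (z - y) * gamma_series_pdf \<alpha> b \<gamma> y \<partial>lborel)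
           = ennreal (gamma_series \<alpha> (a * b) (\<beta> + \<gamma>) z)"
    using F by (simp add: gamma_series_def sums_iff)
  show "0 \<le> gamma_series \<alpha> (a * b) (\<beta> + \<gamma>) z"
    using F F_nonneg by (simp add: gamma_series_def sums_iff)
qed

lemma gamma_series_abs_summable_plus1:
  assumes \<alpha>: "0 < \<alpha>" and \<beta>: "0 < \<beta>" and a: "gamma_series_abs_summable \<alpha> a \<beta>" and z: "0 \<le> z"
  shows "summable (\<lambda>i. \<bar>a $ i\<bar> * gamma_kernel (real i * \<alpha> + \<beta> + 1) z)"
proof (cases "z = 0")
  case False
  have "summable (\<lambda>i. z / \<beta> * (\<bar>a $ i\<bar> * gamma_kernel (real i * \<alpha> + \<beta>) z))"
    using a z False by (intro summable_mult) (simp add: gamma_series_abs_summable_def)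
  then show ?thesis
  proof (rule summable_comparison_test'[where N = 0])
    fix i
    have s: "0 < real i * \<alpha> + \<beta>" "\<beta> \<le> real i * \<alpha> + \<beta>"
      using \<alpha> \<beta> by (simp_all add: add_nonneg_pos)
    then show "norm (\<bar>a $ i\<bar> * gamma_kernel (real i * \<alpha> + \<beta> + 1) z)
        \<le> z / \<beta> * (\<bar>a $ i\<bar> * gamma_kernel (real i * \<alpha> + \<beta>) z)"
      using \<beta> z gamma_kernel_nonneg[OF s(1), of z]
      by (simp add: gamma_kernel_plus1 abs_mult mult_ac mult_right_mono divide_left_mono)
  qed
qed (simp add: gamma_kernel_def)

lemma gamma_series_integral_Ioc:
  assumes \<alpha>: "0 < \<alpha>" and \<beta>: "0 < \<beta>" and a: "gamma_series_abs_summable \<alpha> a \<beta>" and z: "0 \<le> z"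
  defines "F \<equiv> \<lambda>t. indicator {0<..z} t * gamma_series \<alpha> a \<beta> t"
  shows "integrable lborel F"
    and "(\<lambda>i. a $ i * gamma_kernel (real i * \<alpha> + \<beta> + 1) z) sums (\<integral>t. F t \<partial>lborel)"
proof -
  define s where "s i = real i * \<alpha> + \<beta>" for i
  have s: "0 < s i" for i using \<alpha> \<beta> by (simp add: s_def add_nonneg_pos)
  define T where "T i t = a $ i * (indicator {0<..z} t * gamma_kernel (s i) t)" for i t
  have T: "has_bochner_integral lborel (T i) (a $ i * gamma_kernel (s i + 1) z)" for i
    unfolding T_def by (intro has_bochner_integral_mult_right has_bochner_integral_gamma_kernel_Ioc s z)
  have T_abs: "\<bar>T i t\<bar> = \<bar>a $ i\<bar> * (indicator {0<..z} t * gamma_kernel (s i) t)" for i t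
    using gamma_kernel_nonneg[OF s] by (simp add: T_def abs_mult)
  have "(\<lambda>i. T i t) sums F t \<and> summable (\<lambda>i. \<bar>T i t\<bar>)" for t
  proof (cases "t \<in> {0<..z}")
    case True
    then have "summable (\<lambda>i. \<bar>T i t\<bar>)"
      using a by (simp add: gamma_series_abs_summable_def T_abs s_def)
    then show ?thesis
      using True summable_rabs_cancel by (simp add: T_def F_def gamma_series_def s_def summable_sums)
  qed (simp add: T_def F_def)
  moreover have "(\<integral>t. \<bar>T i t\<bar> \<partial>lborel) = \<bar>a $ i\<bar> * gamma_kernel (s i + 1) z" for i
    unfolding T_abs
    by (intro has_bochner_integral_integral_eq has_bochner_integral_mult_right
        has_bochner_integral_gamma_kernel_Ioc s z)
  then have "summable (\<lambda>i. \<integral>t. \<bar>T i t\<bar> \<partial>lborel)"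
    using gamma_series_abs_summable_plus1[OF \<alpha> \<beta> a z] by (simp add: s_def)
  ultimately show "integrable lborel F"
    and "(\<lambda>i. a $ i * gamma_kernel (real i * \<alpha> + \<beta> + 1) z) sums (\<integral>t. F t \<partial>lborel)"
    using termwise_integral_suminf[where f = T and F = F, OF T] by (auto simp: s_def)
qed

section \<open>Random variables with gamma-series densities\<close>

(* Nonnegativity of the series is recorded separately: ennreal truncates negative values, so it does
   not follow from the density statement. *)
definition gamma_series_distributed :: "'a measure \<Rightarrow> ('a \<Rightarrow> real) \<Rightarrow> real \<Rightarrow> real fps \<Rightarrow> real \<Rightarrow> bool" where
  "gamma_series_distributed M X \<alpha> a \<beta> \<longleftrightarrow>
     distributed M lborel X (gamma_series_pdf \<alpha> a \<beta>) \<and> gamma_series_abs_summable \<alpha> a \<beta>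
     \<and> (\<forall>z>0. 0 \<le> gamma_series \<alpha> a \<beta> z)"

lemma (in prob_space) gamma_series_distributed_add:
  assumes \<alpha>: "0 < \<alpha>" and \<beta>: "0 < \<beta>" and \<gamma>: "0 < \<gamma>"
    and X: "gamma_series_distributed M X \<alpha> a \<beta>" and Y: "gamma_series_distributed M Y \<alpha> b \<gamma>"
    and indep: "indep_var borel X borel Y"
  shows "gamma_series_distributed M (\<lambda>w. X w + Y w) \<alpha> (a * b) (\<beta> + \<gamma>)"
proof -
  have X_pdf: "distributed M lborel X (gamma_series_pdf \<alpha> a \<beta>)"
    and a: "gamma_series_abs_summable \<alpha> a \<beta>" "\<And>z. 0 < z \<Longrightarrow> 0 \<le> gamma_series \<alpha> a \<beta> z"
    using X by (auto simp: gamma_series_distributed_def)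
  have Y_pdf: "distributed M lborel Y (gamma_series_pdf \<alpha> b \<gamma>)"
    and b: "gamma_series_abs_summable \<alpha> b \<gamma>" "\<And>z. 0 < z \<Longrightarrow> 0 \<le> gamma_series \<alpha> b \<gamma> z"
    using Y by (auto simp: gamma_series_distributed_def)
  note conv = gamma_series_convolution[OF \<alpha> \<beta> \<gamma> a(1) b(1) a(2) b(2)]
  have pdf: "(\<lambda>z. \<integral>\<^sup>+y. gamma_series_pdf \<alpha> a \<beta> (z - y) * gamma_series_pdf \<alpha> b \<gamma> y \<partial>lborel)
      = gamma_series_pdf \<alpha> (a * b) (\<beta> + \<gamma>)"
  proof
    fix z :: real
    show "(\<integral>\<^sup>+y. gamma_series_pdf \<alpha> a \<beta> (z - y) * gamma_series_pdf \<alpha> b \<gamma> y \<partial>lborel)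
        = gamma_series_pdf \<alpha> (a * b) (\<beta> + \<gamma>) z"
    proof (cases "0 < z")
      case True
      then show ?thesis
        using conv(1) by (simp add: gamma_series_pdf_def)
    next
      case False
      have "(\<integral>\<^sup>+y. gamma_series_pdf \<alpha> a \<beta> (z - y) * gamma_series_pdf \<alpha> b \<gamma> y \<partial>lborel) = (\<integral>\<^sup>+(y::real). 0 \<partial>lborel)"
        by (rule nn_integral_cong) (use False in \<open>simp add: gamma_series_pdf_def\<close>)
      then show ?thesis using False by (simp add: gamma_series_pdf_def)
    qed
  qed
  show ?thesis
    using distributed_convolution[OF indep X_pdf Y_pdf] conv(2) gamma_series_abs_summable_mult[OF \<alpha> \<beta> \<gamma> a(1) b(1)]
    unfolding gamma_series_distributed_def pdf by blast
qed

lemma (in prob_space) indep_var_sum_insert: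
  fixes X :: "'i \<Rightarrow> 'a \<Rightarrow> real"
  assumes indep: "indep_vars (\<lambda>_. borel) X (insert j I)" and "j \<notin> I"
  shows "indep_var borel (\<lambda>w. \<Sum>i\<in>I. X i w) borel (X j)"
proof -
  define K where "K b = (if b then I else {j})" for b :: bool
  define Y where "Y b = (if b then (\<lambda>v :: 'i \<Rightarrow> real. \<Sum>i\<in>I. v i) else (\<lambda>v. v j))" for b :: bool
  have "indep_vars (\<lambda>b. PiM (K b) (\<lambda>_. borel)) (\<lambda>b \<omega>. restrict (\<lambda>i. X i \<omega>) (K b)) UNIV"
    by (rule indep_vars_restrict[OF indep]) (use \<open>j \<notin> I\<close> in \<open>auto simp: K_def disjoint_family_on_def\<close>)
  then have "indep_vars (\<lambda>_. borel) (\<lambda>b \<omega>. Y b (restrict (\<lambda>i. X i \<omega>) (K b))) UNIV"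
    by (rule indep_vars_compose2)
       (auto simp: Y_def K_def intro!: borel_measurable_sum measurable_component_singleton)
  moreover have "(\<lambda>b \<omega>. Y b (restrict (\<lambda>i. X i \<omega>) (K b))) = case_bool (\<lambda>w. \<Sum>i\<in>I. X i w) (X j)"
    by (auto simp: fun_eq_iff Y_def K_def split: bool.split)
  moreover have "case_bool borel borel = (\<lambda>_::bool. borel :: real measure)"
    by (auto split: bool.split)
  ultimately show ?thesis
    by (simp add: indep_var_def)
qed

lemma (in prob_space) gamma_series_distributed_sum:
  assumes "finite I" "I \<noteq> {}" and \<alpha>: "0 < \<alpha>"
    and indep: "indep_vars (\<lambda>_. borel) X I"
    and X: "\<And>i. i \<in> I \<Longrightarrow> gamma_series_distributed M (X i) \<alpha> (a i) (\<beta> i)"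
    and \<beta>: "\<And>i. i \<in> I \<Longrightarrow> 0 < \<beta> i"
  shows "gamma_series_distributed M (\<lambda>w. \<Sum>i\<in>I. X i w) \<alpha> (\<Prod>i\<in>I. a i) (\<Sum>i\<in>I. \<beta> i)"
  using assms(1,2) indep X \<beta>
proof (induction I rule: finite_ne_induct)
  case (singleton i)
  then show ?case by simp
next
  case (insert j I)
  have "gamma_series_distributed M (\<lambda>w. (\<Sum>i\<in>I. X i w) + X j w) \<alpha> ((\<Prod>i\<in>I. a i) * a j) ((\<Sum>i\<in>I. \<beta> i) + \<beta> j)"
    using insert indep_vars_subset[OF insert.prems(1)]
    by (intro gamma_series_distributed_add \<alpha> sum_pos indep_var_sum_insert) auto
  then show ?case
    using insert by (simp add: add.commute mult.commute)
qed

lemma (in prob_space) gamma_series_distributed_cdf: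
  assumes \<alpha>: "0 < \<alpha>" and \<beta>: "0 < \<beta>" and X: "gamma_series_distributed M X \<alpha> a \<beta>" and z: "0 \<le> z"
  shows "(\<lambda>i. a $ i * gamma_kernel (real i * \<alpha> + \<beta> + 1) z) sums measure M {w \<in> space M. X w \<le> z}"
proof -
  define F where "F t = indicator {0<..z} t * gamma_series \<alpha> a \<beta> t" for t
  have X_pdf: "distributed M lborel X (gamma_series_pdf \<alpha> a \<beta>)"
    and a: "gamma_series_abs_summable \<alpha> a \<beta>" and a_nonneg: "\<And>t. 0 < t \<Longrightarrow> 0 \<le> gamma_series \<alpha> a \<beta> t"
    using X by (auto simp: gamma_series_distributed_def)
  note F = gamma_series_integral_Ioc[OF \<alpha> \<beta> a z, folded F_def]
  have "emeasure M {w \<in> space M. X w \<le> z} = emeasure (density lborel (gamma_series_pdf \<alpha> a \<beta>)) {..z}"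
    using distributed_measurable[OF X_pdf]
    by (subst distributed_distr_eq_density[OF X_pdf, symmetric], subst emeasure_distr)
       (auto intro!: arg_cong[where f = "emeasure M"])
  also have "\<dots> = (\<integral>\<^sup>+t. ennreal (F t) \<partial>lborel)"
    using distributed_borel_measurable[OF X_pdf]
    by (subst emeasure_density) (auto intro!: nn_integral_cong simp: gamma_series_pdf_def F_def split: split_indicator)
  also have "\<dots> = ennreal (integral\<^sup>L lborel F)"
    using a_nonneg by (intro nn_integral_eq_integral F) (auto simp: F_def split: split_indicator)
  finally have "measure M {w \<in> space M. X w \<le> z} = integral\<^sup>L lborel F"
    using a_nonneg by (simp add: measure_def F_def integral_nonneg split: split_indicator)
  then show ?thesis
    using F(2) by simp
qed

lemma (in prob_space) gamma_series_distributed_explicit: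
  fixes d :: "nat \<Rightarrow> real"
  assumes \<alpha>: "0 < \<alpha>" and \<beta>: "0 < \<beta>" and c: "0 < c"
    and X: "gamma_series_distributed M X \<alpha> (fps_const c * Abs_fps d) \<beta>"
  shows "(\<forall>z>0. summable (\<lambda>i. d i * z powr (-1 + real i * \<alpha> + \<beta>) / Gamma (real i * \<alpha> + \<beta>)))
    \<and> distributed M lborel X (\<lambda>z. ennreal (if 0 < z then
        c * (\<Sum>i. d i * z powr (-1 + real i * \<alpha> + \<beta>) / Gamma (real i * \<alpha> + \<beta>)) else 0))
    \<and> (\<forall>z\<ge>0. (\<lambda>i. c * (d i * z powr (real i * \<alpha> + \<beta>) / Gamma (1 + real i * \<alpha> + \<beta>)))
        sums measure M {w \<in> space M. X w \<le> z})"
proof -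
  have kernel: "gamma_kernel (real i * \<alpha> + \<beta>) z = z powr (-1 + real i * \<alpha> + \<beta>) / Gamma (real i * \<alpha> + \<beta>)"
    and kernel_plus1: "gamma_kernel (real i * \<alpha> + \<beta> + 1) z = z powr (real i * \<alpha> + \<beta>) / Gamma (1 + real i * \<alpha> + \<beta>)"
    for i z by (simp_all add: gamma_kernel_def algebra_simps)
  have summable: "summable (\<lambda>i. d i * gamma_kernel (real i * \<alpha> + \<beta>) z)" if "0 < z" for z
  proof (rule summable_rabs_cancel)
    have "summable (\<lambda>i. c * (\<bar>d i\<bar> * gamma_kernel (real i * \<alpha> + \<beta>) z))"
      using X c that by (simp add: gamma_series_distributed_def gamma_series_abs_summable_def abs_mult mult.assoc)
    then show "summable (\<lambda>i. \<bar>d i * gamma_kernel (real i * \<alpha> + \<beta>) z\<bar>)"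
      using c \<alpha> \<beta> by (simp add: abs_mult gamma_kernel_nonneg add_nonneg_pos)
  qed
  have "gamma_series \<alpha> (fps_const c * Abs_fps d) \<beta> z = c * (\<Sum>i. d i * gamma_kernel (real i * \<alpha> + \<beta>) z)"
    if "0 < z" for z
    using suminf_mult[OF summable[OF that], of c] by (simp add: gamma_series_def mult.assoc)
  then have "gamma_series_pdf \<alpha> (fps_const c * Abs_fps d) \<beta> = (\<lambda>z. ennreal (if 0 < z then
      c * (\<Sum>i. d i * z powr (-1 + real i * \<alpha> + \<beta>) / Gamma (real i * \<alpha> + \<beta>)) else 0))"
    by (simp add: fun_eq_iff gamma_series_pdf_def kernel)
  then show ?thesis
    using X summable gamma_series_distributed_cdf[OF \<alpha> \<beta> X]
    by (simp add: gamma_series_distributed_def kernel kernel_plus1 mult.assoc)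
qed

section \<open>Ratios of independent alpha-mu variables\<close>

lemma (in prob_space) indep_var_lborel:
  "indep_var borel X borel Y \<Longrightarrow> indep_var lborel X lborel Y"
  by (simp add: indep_var_def indep_vars_def bool.case_eq_if)

lemma nn_integral_indicator_divide:
  fixes h :: "real \<Rightarrow> ennreal"
  assumes [measurable]: "h \<in> borel_measurable borel" "A \<in> sets borel" and y: "0 < y"
  shows "(\<integral>\<^sup>+x. h x * indicator A (x / y) \<partial>lborel) = (\<integral>\<^sup>+t. ennreal y * h (t * y) * indicator A t \<partial>lborel)"
proof -
  have "(\<integral>\<^sup>+x. h x * indicator A (x / y) \<partial>lborel)
      = ennreal y * (\<integral>\<^sup>+t. h (t * y) * indicator A t \<partial>lborel)"
    using y by (subst nn_integral_real_affine[where c = y and t = 0]) (auto simp: mult.commute)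
  also have "\<dots> = (\<integral>\<^sup>+t. ennreal y * h (t * y) * indicator A t \<partial>lborel)"
    by (subst nn_integral_cmult[symmetric]) (auto simp: mult.assoc)
  finally show ?thesis .
qed

lemma (in prob_space) distributed_divide:
  fixes X Y :: "'a \<Rightarrow> real" and f g :: "real \<Rightarrow> ennreal"
  assumes X: "distributed M lborel X f" and Y: "distributed M lborel Y g"
    and indep: "indep_var borel X borel Y"
    and g_nonpos: "\<And>y. y \<le> 0 \<Longrightarrow> g y = 0"
  shows "distributed M lborel (\<lambda>w. X w / Y w) (\<lambda>t. \<integral>\<^sup>+y. ennreal y * f (t * y) * g y \<partial>lborel)"
  unfolding distributed_def
proof safe
  have [measurable]: "f \<in> borel_measurable borel" "g \<in> borel_measurable borel"
    "X \<in> borel_measurable M" "Y \<in> borel_measurable M"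
    using distributed_borel_measurable[OF X] distributed_borel_measurable[OF Y]
      distributed_measurable[OF X] distributed_measurable[OF Y] by simp_all
  show "(\<lambda>t. \<integral>\<^sup>+y. ennreal y * f (t * y) * g y \<partial>lborel) \<in> borel_measurable lborel"
    by measurable
  show "random_variable lborel (\<lambda>w. X w / Y w)" by simp
  have XY: "distributed M (lborel \<Otimes>\<^sub>M lborel) (\<lambda>x. (X x, Y x)) (\<lambda>(x, y). f x * g y)"
    by (rule distributed_joint_indep[OF _ _ X Y indep_var_lborel[OF indep]])
       (auto intro: lborel.sigma_finite_measure_axioms)
  show "distr M lborel (\<lambda>w. X w / Y w) = density lborel (\<lambda>t. \<integral>\<^sup>+y. ennreal y * f (t * y) * g y \<partial>lborel)"
  proof (rule measure_eqI)
    fix A assume "A \<in> sets (distr M lborel (\<lambda>w. X w / Y w))"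
    then have [measurable]: "A \<in> sets borel" by simp
    have "(\<lambda>p :: real \<times> real. fst p / snd p) \<in> borel_measurable (lborel \<Otimes>\<^sub>M lborel)"
      by measurable
    from measurable_sets[OF this, of A]
    have [measurable]: "{p :: real \<times> real. fst p / snd p \<in> A} \<in> sets (borel \<Otimes>\<^sub>M borel)"
      by (simp add: space_pair_measure vimage_def)
    have "emeasure (distr M lborel (\<lambda>w. X w / Y w)) A
        = emeasure (distr M (lborel \<Otimes>\<^sub>M lborel) (\<lambda>x. (X x, Y x))) {p. fst p / snd p \<in> A}"
      by (subst (1 2) emeasure_distr) (auto simp: space_pair_measure intro!: arg_cong[where f = "emeasure M"])
    also have "\<dots> = (\<integral>\<^sup>+p. f (fst p) * g (snd p) * indicator {p. fst p / snd p \<in> A} p \<partial>(lborel \<Otimes>\<^sub>M lborel))"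
      by (simp add: distributed_distr_eq_density[OF XY] emeasure_density case_prod_beta')
    also have "\<dots> = (\<integral>\<^sup>+y. (\<integral>\<^sup>+x. f x * g y * indicator A (x / y) \<partial>lborel) \<partial>lborel)"
      by (subst lborel_pair.nn_integral_snd[symmetric]) (auto intro!: nn_integral_cong split: split_indicator)
    also have "\<dots> = (\<integral>\<^sup>+y. (\<integral>\<^sup>+t. ennreal y * f (t * y) * g y * indicator A t \<partial>lborel) \<partial>lborel)"
    proof (rule nn_integral_cong)
      fix y :: real
      show "(\<integral>\<^sup>+x. f x * g y * indicator A (x / y) \<partial>lborel)
          = (\<integral>\<^sup>+t. ennreal y * f (t * y) * g y * indicator A t \<partial>lborel)"
        using nn_integral_indicator_divide[of "\<lambda>x. f x * g y" A y]
        by (cases "0 < y") (simp_all add: g_nonpos mult_ac)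
    qed
    also have "\<dots> = (\<integral>\<^sup>+t. (\<integral>\<^sup>+y. ennreal y * f (t * y) * g y \<partial>lborel) * indicator A t \<partial>lborel)"
      by (subst lborel_pair.Fubini') (auto intro!: nn_integral_cong nn_integral_multc)
    also have "\<dots> = emeasure (density lborel (\<lambda>t. \<integral>\<^sup>+y. ennreal y * f (t * y) * g y \<partial>lborel)) A"
      by (rule emeasure_density[symmetric]) auto
    finally show "emeasure (distr M lborel (\<lambda>w. X w / Y w)) A
        = emeasure (density lborel (\<lambda>t. \<integral>\<^sup>+y. ennreal y * f (t * y) * g y \<partial>lborel)) A" .
  qed simp
qed

definition alpha_mu_norm :: "real \<Rightarrow> real \<Rightarrow> real \<Rightarrow> real" where
  "alpha_mu_norm a mu Om = a * mu powr mu / (Om powr (a * mu) * Gamma mu)"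

definition alpha_mu_rate :: "real \<Rightarrow> real \<Rightarrow> real \<Rightarrow> real" where
  "alpha_mu_rate a mu Om = mu / Om powr a"

(* Coefficients of the density of M / Q; the product of the constant factors over l is the C of the
   theorem. *)
definition alpha_mu_ratio_fps :: "real \<Rightarrow> real \<Rightarrow> real \<Rightarrow> real \<Rightarrow> real \<Rightarrow> real \<Rightarrow> real fps" where
  "alpha_mu_ratio_fps aM aQ muM muQ OmM OmQ =
     fps_const (aM / (Gamma muM * Gamma muQ)) * Abs_fps (u_coef aM aQ muM muQ OmM OmQ)"

lemma alpha_mu_pdf_pos:
  "0 < m \<Longrightarrow> alpha_mu_pdf a mu Om m = alpha_mu_norm a mu Om * m powr (a * mu - 1) * exp (- alpha_mu_rate a mu Om * m powr a)"
  by (simp add: alpha_mu_pdf_def alpha_mu_norm_def alpha_mu_rate_def)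

lemma alpha_mu_pdf_nonneg: "0 < a \<Longrightarrow> 0 < mu \<Longrightarrow> 0 < Om \<Longrightarrow> 0 \<le> alpha_mu_pdf a mu Om m"
  by (simp add: alpha_mu_pdf_def)

lemma alpha_mu_norm_pos: "0 < a \<Longrightarrow> 0 < mu \<Longrightarrow> 0 < Om \<Longrightarrow> 0 < alpha_mu_norm a mu Om"
  by (simp add: alpha_mu_norm_def)

lemma alpha_mu_rate_pos: "0 < mu \<Longrightarrow> 0 < Om \<Longrightarrow> 0 < alpha_mu_rate a mu Om"
  by (simp add: alpha_mu_rate_def)

lemma u_coef_0_pos:
  assumes "0 < aM" "0 < aQ" "0 < muM" "0 < muQ" "0 < OmM" "0 < OmQ"
  shows "0 < u_coef aM aQ muM muQ OmM OmQ 0"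
  using assms by (simp add: u_coef_def rho_tilde_def Gamma_real_pos add_pos_pos)

lemma alpha_mu_ratio_const:
  fixes aM aQ muM muQ OmM OmQ :: real and i :: nat
  assumes "0 < aM" "0 < aQ" "0 < muM" "0 < muQ" "0 < OmM" "0 < OmQ"
  shows "alpha_mu_norm aM muM OmM * alpha_mu_norm aQ muQ OmQ * alpha_mu_rate aM muM OmM ^ i
           / (aQ * alpha_mu_rate aQ muQ OmQ powr (aM * (muM + real i) / aQ + muQ))
         = aM / (Gamma muM * Gamma muQ) * rho_tilde aM aQ muM muQ OmM OmQ powr (aM * (muM + real i))"
    (is "?L = ?R")
proof -
  have Gamma: "0 < Gamma muM" "0 < Gamma muQ" using assms by (auto intro: Gamma_real_pos)
  have "0 < ?L" "0 < ?R"
    using assms Gamma by (simp_all add: alpha_mu_norm_def alpha_mu_rate_def rho_tilde_def)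
  moreover have "ln ?L = ln ?R"
    using assms Gamma
    by (simp add: alpha_mu_norm_def alpha_mu_rate_def rho_tilde_def ln_mult_pos ln_divide_pos ln_realpow field_simps)
  ultimately show ?thesis by simp
qed

lemma alpha_mu_ratio_term:
  fixes aM aQ muM muQ OmM OmQ t :: real and i :: nat
  assumes "0 < aM" "0 < aQ" "0 < muM" "0 < muQ" "0 < OmM" "0 < OmQ" "0 < t"
  defines "r \<equiv> aM * real i + (aM * muM + aQ * muQ)"
  shows "alpha_mu_norm aM muM OmM * alpha_mu_norm aQ muQ OmQ * t powr (aM * muM - 1)
           * (- alpha_mu_rate aM muM OmM * t powr aM) ^ i / fact i
           * (Gamma (r / aQ) / (aQ * alpha_mu_rate aQ muQ OmQ powr (r / aQ)))
         = alpha_mu_ratio_fps aM aQ muM muQ OmM OmQ $ i * gamma_kernel (real i * aM + aM * muM) t"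
proof -
  define \<rho> where "\<rho> = rho_tilde aM aQ muM muQ OmM OmQ"
  define e where "e = aM * (muM + real i) / aQ + muQ"
  have r: "r / aQ = e" using assms(2) by (simp add: r_def e_def field_simps)
  have \<rho>: "0 < \<rho>" using assms by (simp add: \<rho>_def rho_tilde_def)
  have Gamma: "0 < Gamma (real i * aM + aM * muM)"
    using assms by (intro Gamma_real_pos add_nonneg_pos) auto
  have t_powr: "t powr (aM * muM - 1) * (t powr aM) ^ i = t powr (real i * aM + aM * muM - 1)"
    using assms(7) by (simp add: powr_power powr_add[symmetric] algebra_simps)
  have u: "u_coef aM aQ muM muQ OmM OmQ i
      = (-1) ^ i * Gamma (real i * aM + aM * muM) * \<rho> powr (aM * (muM + real i)) / fact i * Gamma e"
  proof -
    have "\<rho> powr (- aM * (muM + real i)) = 1 / \<rho> powr (aM * (muM + real i))"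
      by (simp add: powr_minus divide_inverse)
    moreover have "aM * (real i + muM) = real i * aM + aM * muM" "aM * (real i + muM) / aQ + muQ = e"
      by (simp_all add: e_def algebra_simps)
    ultimately show ?thesis
      by (simp add: u_coef_def \<rho>_def[symmetric])
  qed
  have "alpha_mu_norm aM muM OmM * alpha_mu_norm aQ muQ OmQ * t powr (aM * muM - 1)
           * (- alpha_mu_rate aM muM OmM * t powr aM) ^ i / fact i
           * (Gamma (r / aQ) / (aQ * alpha_mu_rate aQ muQ OmQ powr (r / aQ)))
      = (-1) ^ i * (alpha_mu_norm aM muM OmM * alpha_mu_norm aQ muQ OmQ * alpha_mu_rate aM muM OmM ^ i
           / (aQ * alpha_mu_rate aQ muQ OmQ powr e)) * (t powr (aM * muM - 1) * (t powr aM) ^ i) * Gamma e / fact i"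
  proof -
    have "(- alpha_mu_rate aM muM OmM * t powr aM) ^ i = (-1) ^ i * alpha_mu_rate aM muM OmM ^ i * (t powr aM) ^ i"
      by (simp add: power_minus[of "alpha_mu_rate aM muM OmM * t powr aM"] power_mult_distrib)
    then show ?thesis
      unfolding r by (simp add: mult_ac)
  qed
  also have "\<dots> = (-1) ^ i * (aM / (Gamma muM * Gamma muQ) * \<rho> powr (aM * (muM + real i)))
      * t powr (real i * aM + aM * muM - 1) * Gamma e / fact i"
    unfolding alpha_mu_ratio_const[OF assms(1-6), of i, folded e_def \<rho>_def] t_powr ..
  also have "\<dots> = alpha_mu_ratio_fps aM aQ muM muQ OmM OmQ $ i * gamma_kernel (real i * aM + aM * muM) t"
    using Gamma by (simp add: alpha_mu_ratio_fps_def gamma_kernel_def u) (simp add: mult_ac)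
  finally show ?thesis .
qed

lemma alpha_mu_ratio_integrand:
  fixes t y :: real
  assumes t: "0 < t" and y: "0 < y"
  shows "y * alpha_mu_pdf aM muM OmM (t * y) * alpha_mu_pdf aQ muQ OmQ y
       = alpha_mu_norm aM muM OmM * alpha_mu_norm aQ muQ OmQ * t powr (aM * muM - 1)
         * (y powr (aM * muM + aQ * muQ - 1) * exp (- alpha_mu_rate aM muM OmM * (t * y) powr aM))
         * exp (- alpha_mu_rate aQ muQ OmQ * y powr aQ)"
proof -
  have "y * (t * y) powr (aM * muM - 1) * y powr (aQ * muQ - 1) = t powr (aM * muM - 1) * y powr (aM * muM + aQ * muQ - 1)"
    using t y by (simp add: powr_mult powr_add[symmetric] mult_ac powr_mult_base)
  then show ?thesis
    using t y by (simp add: alpha_mu_pdf_pos mult_ac)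
qed

lemma alpha_mu_ratio_density:
  fixes aM aQ muM muQ OmM OmQ t :: real
  assumes aM: "0 < aM" and aMQ: "aM < aQ" and pos: "0 < muM" "0 < muQ" "0 < OmM" "0 < OmQ" and t: "0 < t"
  defines "a \<equiv> alpha_mu_ratio_fps aM aQ muM muQ OmM OmQ"
  shows "(\<integral>\<^sup>+y. ennreal y * ennreal (alpha_mu_pdf aM muM OmM (t * y)) * ennreal (alpha_mu_pdf aQ muQ OmQ y) \<partial>lborel)
           = ennreal (gamma_series aM a (aM * muM) t)"
    and "0 \<le> gamma_series aM a (aM * muM) t"
    and "summable (\<lambda>i. \<bar>a $ i\<bar> * gamma_kernel (real i * aM + aM * muM) t)"
proof -
  have aQ: "0 < aQ" using aM aMQ by simp
  define C where "C = alpha_mu_norm aM muM OmM * alpha_mu_norm aQ muQ OmQ * t powr (aM * muM - 1)"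
  define F where "F y = indicator {0<..} y * (y * alpha_mu_pdf aM muM OmM (t * y) * alpha_mu_pdf aQ muQ OmQ y)" for y
  have C: "0 < C" using aM aQ pos t by (simp add: C_def alpha_mu_norm_pos)
  have F_eq: "F = (\<lambda>y. indicator {0<..} y * (C * (y powr (aM * muM + aQ * muQ - 1)
      * exp (- alpha_mu_rate aM muM OmM * (t * y) powr aM)) * exp (- alpha_mu_rate aQ muQ OmQ * y powr aQ)))"
    using t by (auto simp: fun_eq_iff F_def alpha_mu_ratio_integrand C_def split: split_indicator)
  have coefficient: "C * (- alpha_mu_rate aM muM OmM * t powr aM) ^ i / fact i
      * (Gamma ((aM * real i + (aM * muM + aQ * muQ)) / aQ)
         / (aQ * alpha_mu_rate aQ muQ OmQ powr ((aM * real i + (aM * muM + aQ * muQ)) / aQ)))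
      = a $ i * gamma_kernel (real i * aM + aM * muM) t" for i
    using alpha_mu_ratio_term[OF aM aQ pos t, of i] by (simp add: C_def a_def)
  note series = integral_exp_powr_series[OF aM aMQ _ less_imp_le[OF C] _ _ t,
      of "aM * muM + aQ * muQ" "alpha_mu_rate aM muM OmM" "alpha_mu_rate aQ muQ OmQ",
      folded F_eq, unfolded coefficient]
  have F: "integrable lborel F" "(\<lambda>i. a $ i * gamma_kernel (real i * aM + aM * muM) t) sums (\<integral>y. F y \<partial>lborel)"
    and "summable (\<lambda>i. \<bar>a $ i * gamma_kernel (real i * aM + aM * muM) t\<bar>)"
    using series aM aQ pos by (simp_all add: alpha_mu_rate_pos add_pos_pos less_imp_le)
  moreover have "0 \<le> gamma_kernel (real i * aM + aM * muM) t" for i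
    using aM pos by (intro gamma_kernel_nonneg add_nonneg_pos) auto
  ultimately show "summable (\<lambda>i. \<bar>a $ i\<bar> * gamma_kernel (real i * aM + aM * muM) t)"
    by (simp add: abs_mult)
  have F_nonneg: "0 \<le> F y" for y
    using alpha_mu_pdf_nonneg[OF aM pos(1,3)] alpha_mu_pdf_nonneg[OF aQ pos(2,4)]
    by (simp add: F_def split: split_indicator)
  have "(\<integral>\<^sup>+y. ennreal y * ennreal (alpha_mu_pdf aM muM OmM (t * y)) * ennreal (alpha_mu_pdf aQ muQ OmQ y) \<partial>lborel)
      = (\<integral>\<^sup>+y. ennreal (F y) \<partial>lborel)"
  proof (rule nn_integral_cong)
    fix y :: real
    show "ennreal y * ennreal (alpha_mu_pdf aM muM OmM (t * y)) * ennreal (alpha_mu_pdf aQ muQ OmQ y) = ennreal (F y)"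
      using alpha_mu_pdf_nonneg[OF aM pos(1,3), of "t * y"] alpha_mu_pdf_nonneg[OF aQ pos(2,4), of y]
      by (cases "0 < y") (simp_all add: F_def ennreal_mult[symmetric] ennreal_neg)
  qed
  also have "\<dots> = ennreal (integral\<^sup>L lborel F)"
    using F(1) F_nonneg by (simp add: nn_integral_eq_integral)
  finally show "(\<integral>\<^sup>+y. ennreal y * ennreal (alpha_mu_pdf aM muM OmM (t * y)) * ennreal (alpha_mu_pdf aQ muQ OmQ y) \<partial>lborel)
      = ennreal (gamma_series aM a (aM * muM) t)"
    using F(2) by (simp add: gamma_series_def sums_iff)
  show "0 \<le> gamma_series aM a (aM * muM) t"
    using F(2) F_nonneg by (simp add: gamma_series_def sums_iff integral_nonneg)
qed

lemma (in prob_space) gamma_series_distributed_alpha_mu_ratio: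
  assumes aM: "0 < aM" and aMQ: "aM < aQ" and pos: "0 < muM" "0 < muQ" "0 < OmM" "0 < OmQ"
    and Mv: "distributed M lborel Mv (\<lambda>m. ennreal (alpha_mu_pdf aM muM OmM m))"
    and Qv: "distributed M lborel Qv (\<lambda>q. ennreal (alpha_mu_pdf aQ muQ OmQ q))"
    and indep: "indep_var borel Mv borel Qv"
  shows "gamma_series_distributed M (\<lambda>w. Mv w / Qv w) aM (alpha_mu_ratio_fps aM aQ muM muQ OmM OmQ) (aM * muM)"
proof -
  note density = alpha_mu_ratio_density[OF aM aMQ pos]
  have "(\<lambda>t. \<integral>\<^sup>+y. ennreal y * ennreal (alpha_mu_pdf aM muM OmM (t * y)) * ennreal (alpha_mu_pdf aQ muQ OmQ y) \<partial>lborel)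
      = gamma_series_pdf aM (alpha_mu_ratio_fps aM aQ muM muQ OmM OmQ) (aM * muM)"
  proof
    fix t :: real
    show "(\<integral>\<^sup>+y. ennreal y * ennreal (alpha_mu_pdf aM muM OmM (t * y)) * ennreal (alpha_mu_pdf aQ muQ OmQ y) \<partial>lborel)
        = gamma_series_pdf aM (alpha_mu_ratio_fps aM aQ muM muQ OmM OmQ) (aM * muM) t"
    proof (cases "0 < t")
      case False
      have zero: "ennreal y * ennreal (alpha_mu_pdf aM muM OmM (t * y)) * ennreal (alpha_mu_pdf aQ muQ OmQ y) = 0" for y
        using False mult_nonpos_nonneg[of t y] by (cases "0 < y") (simp_all add: alpha_mu_pdf_def ennreal_neg)
      have "(\<integral>\<^sup>+y. ennreal y * ennreal (alpha_mu_pdf aM muM OmM (t * y)) * ennreal (alpha_mu_pdf aQ muQ OmQ y) \<partial>lborel)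
          = (\<integral>\<^sup>+(y::real). 0 \<partial>lborel)"
        by (simp only: zero)
      then show ?thesis using False by (simp add: gamma_series_pdf_def)
    qed (simp add: density(1) gamma_series_pdf_def)
  qed
  then show ?thesis
    using distributed_divide[OF Mv Qv indep] density(2,3)
    by (simp add: gamma_series_distributed_def gamma_series_abs_summable_def alpha_mu_pdf_def)
qed

lemma prod_alpha_mu_ratio_fps:
  assumes aM: "0 < aM" and aQ: "0 < aQ"
    and pos: "\<And>l. l \<in> {1..L} \<Longrightarrow> 0 < muM l \<and> 0 < muQ l \<and> 0 < OmM l \<and> 0 < OmQ l"
  shows "(\<Prod>l=1..L. alpha_mu_ratio_fps aM aQ (muM l) (muQ l) (OmM l) (OmQ l))
       = fps_const (aM ^ L * (\<Prod>l=1..L. 1 / (Gamma (muM l) * Gamma (muQ l))))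
         * Abs_fps (delta_coef L (\<lambda>l. u_coef aM aQ (muM l) (muQ l) (OmM l) (OmQ l) 0)
             (\<lambda>l. phi_coef (u_coef aM aQ (muM l) (muQ l) (OmM l) (OmQ l))))"
proof -
  have "(\<Prod>l=1..L. Abs_fps (u_coef aM aQ (muM l) (muQ l) (OmM l) (OmQ l)))
      = Abs_fps (delta_coef L (\<lambda>l. u_coef aM aQ (muM l) (muQ l) (OmM l) (OmQ l) 0)
          (\<lambda>l. phi_coef (u_coef aM aQ (muM l) (muQ l) (OmM l) (OmQ l))))"
    using delta_coef_eq_fps_prod_nth[of L "\<lambda>l. u_coef aM aQ (muM l) (muQ l) (OmM l) (OmQ l)"]
      u_coef_0_pos[OF aM aQ] pos
    by (simp add: fps_eq_iff less_imp_neq[symmetric])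
  moreover have "(\<Prod>l=1..L. aM / (Gamma (muM l) * Gamma (muQ l)))
      = aM ^ L * (\<Prod>l=1..L. 1 / (Gamma (muM l) * Gamma (muQ l)))"
    using prod.distrib[of "\<lambda>_. aM" "\<lambda>l. 1 / (Gamma (muM l) * Gamma (muQ l))" "{1..L}"] by simp
  ultimately show ?thesis
    by (simp add: alpha_mu_ratio_fps_def prod.distrib flip: fps_const_prod)
qed

theorem proposition3:
  fixes P :: "'w measure"
    and L :: nat
    and aM aQ :: real
    and muM muQ OmM OmQ :: "nat \<Rightarrow> real"
    and Mv Qv :: "nat \<Rightarrow> 'w \<Rightarrow> real"
  assumes "prob_space P"
    and "L \<ge> 1"
    and "0 < aM" and "aM < aQ"
    and "\<forall>l\<in>{1..L}. 0 < muM l \<and> 0 < muQ l \<and> 0 < OmM l \<and> 0 < OmQ l"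
    and "\<forall>l\<in>{1..L}. distributed P lborel (Mv l) (\<lambda>m. ennreal (alpha_mu_pdf aM (muM l) (OmM l) m))"
    and "\<forall>l\<in>{1..L}. distributed P lborel (Qv l) (\<lambda>q. ennreal (alpha_mu_pdf aQ (muQ l) (OmQ l) q))"
    and "\<forall>l\<in>{1..L}. prob_space.indep_var P borel (Mv l) borel (Qv l)"
    and "prob_space.indep_vars P (\<lambda>_. borel) (\<lambda>l w. Mv l w / Qv l w) {1..L}"
  defines "delta \<equiv> delta_coef L
        (\<lambda>l. u_coef aM aQ (muM l) (muQ l) (OmM l) (OmQ l) 0)
        (\<lambda>l h. phi_coef (\<lambda>i. u_coef aM aQ (muM l) (muQ l) (OmM l) (OmQ l) i) h)"
    and "B \<equiv> aM * (\<Sum>l = 1..L. muM l)"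
    and "C \<equiv> aM ^ L * (\<Prod>l = 1..L. 1 / (Gamma (muM l) * Gamma (muQ l)))"
    and "Z \<equiv> \<lambda>w. \<Sum>l = 1..L. Mv l w / Qv l w"
  shows "(\<forall>z>0. summable (\<lambda>i. delta i * z powr (-1 + real i * aM + B) / Gamma (real i * aM + B)))
    \<and> distributed P lborel Z
        (\<lambda>z. ennreal (if 0 < z then
            C * (\<Sum>i. delta i * z powr (-1 + real i * aM + B) / Gamma (real i * aM + B))
          else 0))
    \<and> (\<forall>z\<ge>0. (\<lambda>i. C * (delta i * z powr (real i * aM + B) / Gamma (1 + real i * aM + B)))
              sums measure P {w \<in> space P. Z w \<le> z})"
proof -
  interpret prob_space P by fact
  have pos: "0 < muM l" "0 < muQ l" "0 < OmM l" "0 < OmQ l" if "l \<in> {1..L}" for l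
    using assms(5) that by auto
  have B: "0 < B"
    unfolding B_def using assms(2,3) pos by (intro mult_pos_pos sum_pos) auto
  have C: "0 < C"
    unfolding C_def using assms(3) pos by (intro mult_pos_pos zero_less_power prod_pos) auto
  have "gamma_series_distributed P Z aM (\<Prod>l=1..L. alpha_mu_ratio_fps aM aQ (muM l) (muQ l) (OmM l) (OmQ l)) B"
    using gamma_series_distributed_sum[of "{1..L}" aM "\<lambda>l w. Mv l w / Qv l w"] assms(2-9) pos
      gamma_series_distributed_alpha_mu_ratio
    by (auto simp: Z_def B_def sum_distrib_left)
  then have "gamma_series_distributed P Z aM (fps_const C * Abs_fps delta) B"
    using prod_alpha_mu_ratio_fps[of aM aQ L] assms(3-5) by (simp add: C_def delta_def)
  then show ?thesis
    using gamma_series_distributed_explicit[OF assms(3) B C] by blast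
qed

end
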